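(* Consider the problem, assumptions and the algorithm DProxSGT described in the context, and let $\eta\le\lambda\le\frac{1}{4L}$. Then for every $t\ge0$, $$\sum_{i=1}^n\mathbb{E}[\phi_\lambda(\mathbf{x}_i^{t+1})]\le\sum_{i=1}^n\mathbb{E}[\phi_\lambda(\mathbf{x}_i^t)]+\frac4\lambda\mathbb{E}\big[\|\mathbf{X}_\perp^t\|^2\big]+\frac{4\eta^2}{\lambda}\mathbb{E}\big[\|\mathbf{Y}_\perp^t\|^2\big]-\frac{\eta}{4\lambda^2}\mathbb{E}\big[\|\widehat{\mathbf{X}}^t-\mathbf{X}^t\|^2\big]+\frac{\eta^2\sigma^2}{\lambda}.$$
   Context: Problem: $n\ge1$ workers, $d\ge1$. For each $i$, $\mathcal{D}_i$ is a distribution, $F_i(\cdot,\xi):\mathbb{R}^d\to\mathbb{R}$, $f_i(\mathbf{x})=\mathbb{E}_{\xi_i\sim\mathcal{D}_i}[F_i(\mathbf{x},\xi_i)]$, $f=\frac1n\sum_if_i$, $\phi=f+r$. Assumptions: $r$ is closed convex; each $f_i$ is $L$-smooth on $\mathrm{dom}(r)$; $\min\phi>-\infty$. Mixing matrix $\mathbf{W}\in\mathbb{R}^{n\times n}$ on a connected graph: doubly stochastic, $\mathbf{W}_{ij}=0$ if $i\ne j$ are not neighbors, $\mathrm{Null}(\mathbf{W}-\mathbf{I})=\mathrm{span}\{\mathbf{1}\}$, $\|\mathbf{W}-\mathbf{J}\|_2<1$ with $\mathbf{J}=\mathbf{1}\mathbf{1}^\top/n$. Stochastic gradients: samples $\{\xi_i^t\}$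 independent; for all $i$ and $\mathbf{x}\in\mathrm{dom}(r)$, $\mathbb{E}_{\xi_i}[\nabla F_i(\mathbf{x},\xi_i)]=\nabla f_i(\mathbf{x})$ and $\mathbb{E}_{\xi_i}\|\nabla F_i(\mathbf{x},\xi_i)-\nabla f_i(\mathbf{x})\|^2\le\sigma^2$. Algorithm DProxSGT with step size $\eta>0$: initialize $\mathbf{x}_i^0$, $\mathbf{y}_i^{-1}=\mathbf{0}$, $\nabla F_i(\mathbf{x}_i^{-1},\xi_i^{-1})=\mathbf{0}$. For $t=0,1,\dots$, node $i$ draws $\xi_i^t\sim\mathcal{D}_i$ and sets $\mathbf{y}_i^{t-1/2}=\mathbf{y}_i^{t-1}+\nabla F_i(\mathbf{x}_i^t,\xi_i^t)-\nabla F_i(\mathbf{x}_i^{t-1},\xi_i^{t-1})$, $\mathbf{y}_i^t=\sum_j\mathbf{W}_{ji}\mathbf{y}_j^{t-1/2}$, $\mathbf{x}_i^{t+1/2}=\mathrm{prox}_{\eta r}(\mathbf{x}_i^t-\eta\mathbf{y}_i^t)$ with $\mathrm{prox}_{\eta r}(\mathbf{z})=\arg\min_{\mathbf{u}}\{r(\mathbf{u})+\frac1{2\eta}\|\mathbf{u}-\mathbf{z}\|^2\}$, $\mathbf{x}_i^{t+1}=\sum_j\mathbf{W}_{ji}\mathbf{x}_j^{t+1/2}$. Notation: $\mathbf{X}^t=[\mathbf{x}_1^t,\dots,\mathbf{x}_n^t]$, $\mathbf{Y}^t$ analogously; $\|\cdot\|$ Frobenius norm; $\mathbf{X}_\perp=\mathbf{X}(\mathbf{I}-\mathbf{J})$;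 $\mathbb{E}$ full expectation. For $\lambda\in(0,1/L)$, $\phi_\lambda(\mathbf{x})=\min_{\mathbf{y}}\{\phi(\mathbf{y})+\frac1{2\lambda}\|\mathbf{y}-\mathbf{x}\|^2\}$ (Moreau envelope), $\mathrm{prox}_{\lambda\phi}(\mathbf{x})$ its unique minimizer, and $\widehat{\mathbf{X}}^t=[\mathrm{prox}_{\lambda\phi}(\mathbf{x}_1^t),\dots,\mathrm{prox}_{\lambda\phi}(\mathbf{x}_n^t)]$. *)

theory Defs
  imports "HOL-Analysis.Analysis" "HOL-Probability.Probability"
begin

definition prox_of :: "('a::real_normed_vector \<Rightarrow> ereal) \<Rightarrow> real \<Rightarrow> 'a \<Rightarrow> 'a" where
  "prox_of g \<gamma> z =
     (SOME u. \<forall>v. g u + ereal (norm (u - z)^2 / (2 * \<gamma>)) \<le> g v + ereal (norm (v - z)^2 / (2 * \<gamma>)))"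

definition moreau :: "('a::real_normed_vector \<Rightarrow> ereal) \<Rightarrow> real \<Rightarrow> 'a \<Rightarrow> ereal" where
  "moreau g \<gamma> x = (INF y. g y + ereal (norm (y - x)^2 / (2 * \<gamma>)))"

definition edom :: "('a \<Rightarrow> ereal) \<Rightarrow> 'a set" where
  "edom r = {x. r x < \<infinity>}"

definition closed_proper_convex :: "('a::real_normed_vector \<Rightarrow> ereal) \<Rightarrow> bool" where
  "closed_proper_convex r \<longleftrightarrow>
     (\<forall>x. r x > -\<infinity>) \<and> (\<exists>x. r x < \<infinity>) \<and>
     convex {(x, t::real). r x \<le> ereal t} \<and> closed {(x, t::real). r x \<le> ereal t}"

text \<open>State of DProxSGT at iteration t (sample path omega):
  (X^t, Y^(t-1), stochastic gradients at iteration t-1).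
  Node i's vectors are the columns X i. The mixing uses W $ j $ i.\<close>
fun dprox_state ::
  "real^'n^'n \<Rightarrow> ('n::finite \<Rightarrow> 'a::real_normed_vector \<Rightarrow> 'b \<Rightarrow> 'a) \<Rightarrow> ('a \<Rightarrow> ereal) \<Rightarrow> real
   \<Rightarrow> ('n \<Rightarrow> 'a) \<Rightarrow> (nat \<Rightarrow> 'n \<Rightarrow> 'w \<Rightarrow> 'b) \<Rightarrow> nat \<Rightarrow> 'w
   \<Rightarrow> ('n \<Rightarrow> 'a) \<times> ('n \<Rightarrow> 'a) \<times> ('n \<Rightarrow> 'a)" where
  "dprox_state W G r \<eta> x0 xi 0 \<omega> = (x0, (\<lambda>_. 0), (\<lambda>_. 0))"
| "dprox_state W G r \<eta> x0 xi (Suc t) \<omega> =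
     (let (X, Y, Gp) = dprox_state W G r \<eta> x0 xi t \<omega>;
          Gt = (\<lambda>i. G i (X i) (xi t i \<omega>));
          Yh = (\<lambda>i. Y i + Gt i - Gp i);
          Yn = (\<lambda>i. \<Sum>j\<in>UNIV. (W $ j $ i) *\<^sub>R Yh j);
          Xh = (\<lambda>i. prox_of r \<eta> (X i - \<eta> *\<^sub>R Yn i));
          Xn = (\<lambda>i. \<Sum>j\<in>UNIV. (W $ j $ i) *\<^sub>R Xh j)
      in (Xn, Yn, Gt))"

definition dX where
  "dX W G r \<eta> x0 xi t \<omega> = fst (dprox_state W G r \<eta> x0 xi t \<omega>)"

text \<open>y_i^t (computed during iteration t, i.e. stored in state t+1)\<close>
definition dY where
  "dY W G r \<eta> x0 xi t \<omega> = fst (snd (dprox_state W G r \<eta> x0 xi (Suc t) \<omega>))"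

text \<open>Squared Frobenius norm of the consensus error X(I - J).\<close>
definition perp_sq :: "('n::finite \<Rightarrow> 'a::real_inner) \<Rightarrow> real" where
  "perp_sq X = (\<Sum>i\<in>UNIV. norm (X i - (1 / real CARD('n)) *\<^sub>R (\<Sum>j\<in>UNIV. X j))^2)"

end

(* Bound the Moreau envelope at each mixed iterate x_i^{t+1} = sum_j W_ji z_j by evaluating
   its defining minimisation at the same convex combination of the proximal points
   xhat_j = prox_{lam phi}(x_j^t); convexity of r, L-smoothness of f and double stochasticity
   of W reduce everything to sums over nodes of |xhat_j - z_j|^2, where z_j is the local
   proximal gradient step.  Since xhat_j is a fixed point of a shifted proximal gradient map and
   prox_{eta r} is non-expansive, |xhat_j - z_j| is at most the error of y_j as an estimate of
   the gradient at xhat_j; this error splits into the averaged gradient noise, the consensus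
   errors of X and Y, and a smoothness term, and lam <= 1/(4L) makes the coefficients close up.
   In expectation the cross term with the averaged noise vanishes, because the samples of
   iteration t are independent of the current iterate, and its square has mean at most
   sigma^2/n, because the noises of different nodes are orthogonal. *)
theory Submission
  imports Defs
begin

section \<open>Closed proper convex functions\<close>

lemma notin_edom_eq_infinity: "x \<notin> edom r \<Longrightarrow> r x = \<infinity>"
  unfolding edom_def by (simp add: top.not_eq_extremum)

lemma closed_proper_convex_finite:
  assumes "closed_proper_convex r" and "x \<in> edom r"
  shows "r x = ereal (real_of_ereal (r x))"
proof -
  have "r x \<noteq> -\<infinity>" using assms(1) unfolding closed_proper_convex_def by auto
  then show ?thesis using assms(2) unfolding edom_def by (cases "r x") auto
qed

lemma closed_proper_convex_edom_nonempty: "closed_proper_convex r \<Longrightarrow> \<exists>p. p \<in> edom r"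
  unfolding closed_proper_convex_def edom_def by auto

lemma closed_proper_convex_jensen:
  assumes r: "closed_proper_convex r" and I: "finite I" and w: "\<And>i. i \<in> I \<Longrightarrow> w i \<ge> 0"
    and w1: "sum w I = 1" and y: "\<And>i. i \<in> I \<Longrightarrow> y i \<in> edom r"
  shows "r (\<Sum>i\<in>I. w i *\<^sub>R y i) \<le> ereal (\<Sum>i\<in>I. w i * real_of_ereal (r (y i)))"
proof -
  let ?epi = "{(x, t::real). r x \<le> ereal t}"
  have epi: "(y i, real_of_ereal (r (y i))) \<in> ?epi" if "i \<in> I" for i
    using closed_proper_convex_finite[OF r y[OF that]] by simp
  have "convex ?epi" using r unfolding closed_proper_convex_def by auto
  then have "(\<Sum>i\<in>I. w i *\<^sub>R (y i, real_of_ereal (r (y i)))) \<in> ?epi"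
    by (rule convex_sum[OF I _ w1]) (use w epi in auto)
  moreover have "(\<Sum>i\<in>I. w i *\<^sub>R (y i, real_of_ereal (r (y i)))) =
     ((\<Sum>i\<in>I. w i *\<^sub>R y i), (\<Sum>i\<in>I. w i * real_of_ereal (r (y i))))"
    by (simp add: prod_eq_iff fst_sum snd_sum)
  ultimately show ?thesis by simp
qed

lemma closed_proper_convex_jensen_pair:
  assumes r: "closed_proper_convex r" and x: "x \<in> edom r" and y: "y \<in> edom r"
    and s: "0 \<le> s" "s \<le> 1"
  shows "r ((1 - s) *\<^sub>R x + s *\<^sub>R y) \<le> ereal ((1 - s) * real_of_ereal (r x) + s * real_of_ereal (r y))"
  using closed_proper_convex_jensen[OF r, of UNIV "\<lambda>i. if i then 1 - s else s" "\<lambda>i. if i then x else y"]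
    s x y by (simp add: UNIV_bool add.commute)

lemma closed_proper_convex_convex_edom:
  assumes r: "closed_proper_convex r"
  shows "convex (edom r)"
proof (rule convexI)
  fix x y and u v :: real
  assume "x \<in> edom r" "y \<in> edom r" "0 \<le> u" "0 \<le> v" "u + v = 1"
  moreover from this have "u = 1 - v" by simp
  ultimately have "r (u *\<^sub>R x + v *\<^sub>R y) \<le> ereal (u * real_of_ereal (r x) + v * real_of_ereal (r y))"
    using closed_proper_convex_jensen_pair[OF r, of x y v] by simp
  then show "u *\<^sub>R x + v *\<^sub>R y \<in> edom r" unfolding edom_def by (auto elim: le_less_trans)
qed

lemma closed_proper_convex_epigraph_limit:
  assumes r: "closed_proper_convex r" and xs: "xs \<longlonglongrightarrow> l" and ts: "ts \<longlonglongrightarrow> t"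
    and le: "\<And>n. r (xs n) \<le> ereal (ts n)"
  shows "r l \<le> ereal t"
proof -
  have "closed {(x, t::real). r x \<le> ereal t}" using r unfolding closed_proper_convex_def by auto
  then have "(l, t) \<in> {(x, t::real). r x \<le> ereal t}"
    using le tendsto_Pair[OF xs ts] unfolding closed_sequential_limits by force
  then show ?thesis by simp
qed

lemma compact_sublevels_attains_min:
  fixes h :: "'a::t2_space \<Rightarrow> real"
  assumes p: "p \<in> S" and cpt: "\<And>a. compact {x \<in> S. h x \<le> a}"
  obtains u where "u \<in> S" "\<And>v. v \<in> S \<Longrightarrow> h u \<le> h v"
proof -
  define K where "K a = {x \<in> S. h x \<le> a}" for a
  have "K (h p) \<inter> (\<Inter>a\<in>h ` K (h p). K a) \<noteq> {}"
  proof (rule compact_imp_fip_image)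
    show "compact (K (h p))" unfolding K_def by (rule cpt)
    show "closed (K a)" for a unfolding K_def by (rule compact_imp_closed[OF cpt])
    fix I assume fin: "finite I" and sub: "I \<subseteq> h ` K (h p)"
    show "K (h p) \<inter> (\<Inter>a\<in>I. K a) \<noteq> {}"
    proof (cases "I = {}")
      case True
      then show ?thesis using p unfolding K_def by auto
    next
      case False
      then have "Min I \<in> h ` K (h p)" using Min_in[OF fin] sub by blast
      then obtain x where x: "x \<in> K (h p)" and hx: "h x = Min I" by auto
      have "x \<in> K a" if "a \<in> I" for a using x Min_le[OF fin that] hx unfolding K_def by auto
      then show ?thesis using x by blast
    qed
  qed
  then obtain u where u: "u \<in> K (h p)" and low: "\<And>a. a \<in> h ` K (h p) \<Longrightarrow> u \<in> K a" by blast
  show ?thesis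
  proof (rule that)
    show "u \<in> S" using u unfolding K_def by simp
    fix v assume v: "v \<in> S"
    show "h u \<le> h v"
    proof (cases "h v \<le> h p")
      case True
      then show ?thesis using low[of "h v"] v unfolding K_def by auto
    next
      case False
      then show ?thesis using u unfolding K_def by auto
    qed
  qed
qed

lemma bounded_quadratic_growthI:
  fixes S :: "'a::real_normed_vector set"
  assumes a: "\<alpha> > 0" and h: "\<And>x. x \<in> S \<Longrightarrow> \<alpha> * norm x ^ 2 \<le> \<beta> * norm x + \<gamma>"
  shows "bounded S"
proof -
  have "norm x \<le> max 1 ((\<bar>\<beta>\<bar> + \<bar>\<gamma>\<bar>) / \<alpha>)" if x: "x \<in> S" for x
  proof (cases "norm x \<le> 1")
    case False
    then have n1: "norm x \<ge> 1" by simp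
    have "\<alpha> * norm x * norm x \<le> \<beta> * norm x + \<gamma>" using h[OF x] by (simp add: power2_eq_square)
    also have "\<dots> \<le> \<bar>\<beta>\<bar> * norm x + \<bar>\<gamma>\<bar> * norm x"
    proof (intro add_mono)
      show "\<beta> * norm x \<le> \<bar>\<beta>\<bar> * norm x" by (intro mult_right_mono) auto
      have "\<bar>\<gamma>\<bar> * 1 \<le> \<bar>\<gamma>\<bar> * norm x" using n1 by (intro mult_left_mono) auto
      then show "\<gamma> \<le> \<bar>\<gamma>\<bar> * norm x" by linarith
    qed
    finally have "(\<alpha> * norm x) * norm x \<le> (\<bar>\<beta>\<bar> + \<bar>\<gamma>\<bar>) * norm x" by (simp add: algebra_simps)
    then have "\<alpha> * norm x \<le> \<bar>\<beta>\<bar> + \<bar>\<gamma>\<bar>" using n1 by (cases "x = 0") (auto simp: mult_le_cancel_right)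
    then have "norm x \<le> (\<bar>\<beta>\<bar> + \<bar>\<gamma>\<bar>) / \<alpha>" using a by (simp add: field_simps)
    then show ?thesis by simp
  qed simp
  then show ?thesis unfolding bounded_iff by blast
qed

lemma closed_proper_convex_closed_sublevel:
  assumes r: "closed_proper_convex r"
    and gc: "continuous_on (edom r) g" and \<psi>c: "continuous_on UNIV \<psi>"
    and \<psi>g: "\<And>x. x \<in> edom r \<Longrightarrow> \<psi> x \<le> g x"
  shows "closed {x \<in> edom r. g x + real_of_ereal (r x) \<le> a}"
  unfolding closed_sequential_limits
proof (intro allI impI, elim conjE)
  fix xs l assume xs: "\<forall>n. xs n \<in> {x \<in> edom r. g x + real_of_ereal (r x) \<le> a}" and lim: "xs \<longlonglongrightarrow> l"
  have xsD: "xs n \<in> edom r" and val: "g (xs n) + real_of_ereal (r (xs n)) \<le> a" for n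
    using xs by auto
  have le: "r (xs n) \<le> ereal (a - g (xs n))" for n
    using val[of n] by (subst closed_proper_convex_finite[OF r xsD]) simp
  have "r (xs n) \<le> ereal (a - \<psi> (xs n))" for n
    using le[of n] \<psi>g[OF xsD[of n]] by (simp add: order_trans)
  moreover have "(\<lambda>n. a - \<psi> (xs n)) \<longlonglongrightarrow> a - \<psi> l"
    by (intro tendsto_diff tendsto_const continuous_on_tendsto_compose[OF \<psi>c lim]) auto
  ultimately have "r l \<le> ereal (a - \<psi> l)" by (intro closed_proper_convex_epigraph_limit[OF r lim])
  then have "r l < \<infinity>" by (rule le_less_trans) simp
  then have lD: "l \<in> edom r" unfolding edom_def by simp
  have "(\<lambda>n. a - g (xs n)) \<longlonglongrightarrow> a - g l"
    by (intro tendsto_diff tendsto_const continuous_on_tendsto_compose[OF gc lim]) (use lD xsD in auto)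
  then have "r l \<le> ereal (a - g l)" using le by (intro closed_proper_convex_epigraph_limit[OF r lim])
  then have "real_of_ereal (r l) \<le> a - g l" by (subst (asm) closed_proper_convex_finite[OF r lD]) simp
  then show "l \<in> {x \<in> edom r. g x + real_of_ereal (r x) \<le> a}" using lD by simp
qed

text \<open>The minorant \<open>\<psi>\<close>, continuous on the whole space, is what keeps limits of
  sublevel sequences inside \<open>edom r\<close>, where \<open>g\<close> alone need not be continuous.\<close>
lemma closed_proper_convex_attains_min:
  fixes r :: "'a::euclidean_space \<Rightarrow> ereal"
  assumes r: "closed_proper_convex r"
    and gc: "continuous_on (edom r) g" and \<psi>c: "continuous_on UNIV \<psi>"
    and \<psi>g: "\<And>x. x \<in> edom r \<Longrightarrow> \<psi> x \<le> g x"
    and bd: "\<And>a. bounded {x \<in> edom r. g x + real_of_ereal (r x) \<le> a}"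
  shows "\<exists>u \<in> edom r. \<forall>v. r u + ereal (g u) \<le> r v + ereal (g v)"
proof -
  obtain p where "p \<in> edom r" using closed_proper_convex_edom_nonempty[OF r] ..
  moreover have "compact {x \<in> edom r. g x + real_of_ereal (r x) \<le> a}" for a
    using bd closed_proper_convex_closed_sublevel[OF r gc \<psi>c \<psi>g] by (simp add: compact_eq_bounded_closed)
  ultimately obtain u where u: "u \<in> edom r"
    and min: "\<And>v. v \<in> edom r \<Longrightarrow> g u + real_of_ereal (r u) \<le> g v + real_of_ereal (r v)"
    using compact_sublevels_attains_min[of p "edom r" "\<lambda>x. g x + real_of_ereal (r x)"] by blast
  have "r u + ereal (g u) \<le> r v + ereal (g v)" for v
  proof (cases "v \<in> edom r")
    case True
    have "r u + ereal (g u) = ereal (g u + real_of_ereal (r u))"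
      by (subst closed_proper_convex_finite[OF r u]) simp
    moreover have "r v + ereal (g v) = ereal (g v + real_of_ereal (r v))"
      by (subst closed_proper_convex_finite[OF r True]) simp
    ultimately show ?thesis using min[OF True] by simp
  qed (simp add: notin_edom_eq_infinity)
  then show ?thesis using u by blast
qed

lemma closed_proper_convex_min_variational_ineq:
  fixes r :: "'a::real_inner \<Rightarrow> ereal"
  assumes r: "closed_proper_convex r" and u: "u \<in> edom r" and v: "v \<in> edom r"
    and umin: "\<And>v. r u + ereal (g u) \<le> r v + ereal (g v)"
    and quad: "\<And>s. 0 < s \<Longrightarrow> s \<le> 1 \<Longrightarrow> g (u + s *\<^sub>R (v - u)) \<le> g u + s * (d \<bullet> (v - u)) + s^2 * K"
  shows "real_of_ereal (r u) - d \<bullet> (v - u) \<le> real_of_ereal (r v)"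
proof -
  define Ru where "Ru = real_of_ereal (r u)"
  define Rv where "Rv = real_of_ereal (r v)"
  define A where "A = Rv - Ru + d \<bullet> (v - u)"
  have "0 \<le> A + s * K" if s0: "0 < s" and s1: "s \<le> 1" for s
  proof -
    define y where "y = u + s *\<^sub>R (v - u)"
    have "r y \<le> ereal ((1 - s) * Ru + s * Rv)"
      using closed_proper_convex_jensen_pair[OF r u v, of s] s0 s1
      unfolding y_def Ru_def Rv_def by (simp add: algebra_simps)
    then have "r u + ereal (g u) \<le> ereal ((1 - s) * Ru + s * Rv) + ereal (g y)"
      using umin[of y] by (metis add_right_mono order_trans)
    then have "Ru + g u \<le> (1 - s) * Ru + s * Rv + g y"
      by (subst (asm) closed_proper_convex_finite[OF r u]) (simp add: Ru_def)
    moreover have "g y \<le> g u + s * (d \<bullet> (v - u)) + s^2 * K" unfolding y_def by (rule quad[OF s0 s1])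
    ultimately have "0 \<le> s * (A + s * K)" unfolding A_def by (simp add: algebra_simps power2_eq_square)
    then show ?thesis using s0 by (simp add: zero_le_mult_iff)
  qed
  then have "\<forall>\<^sub>F s in at_right 0. 0 \<le> A + s * K"
    using eventually_at_right_real[of 0 1] by (rule eventually_mono[rotated]) auto
  moreover have "((\<lambda>s. A + s * K) \<longlongrightarrow> A + 0 * K) (at_right 0)" by (intro tendsto_intros)
  ultimately have "0 \<le> A + 0 * K" by (intro tendsto_lowerbound) auto
  then show ?thesis unfolding A_def Ru_def Rv_def by simp
qed

lemma lipschitz_gradient_taylor_le:
  fixes h :: "'a::real_inner \<Rightarrow> real"
  assumes D: "convex D"
    and hd: "\<And>x. x \<in> D \<Longrightarrow> (h has_derivative (\<lambda>v. gh x \<bullet> v)) (at x within D)"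
    and lip: "\<And>x y. x \<in> D \<Longrightarrow> y \<in> D \<Longrightarrow> norm (gh x - gh y) \<le> L * norm (x - y)"
    and x: "x \<in> D" and y: "y \<in> D"
  shows "\<bar>h y - h x - gh x \<bullet> (y - x)\<bar> \<le> L / 2 * norm (y - x) ^ 2"
proof -
  define \<gamma> where "\<gamma> s = x + s *\<^sub>R (y - x)" for s :: real
  have \<gamma>D: "\<gamma> s \<in> D" if "0 \<le> s" "s \<le> 1" for s
  proof -
    have "\<gamma> s = (1 - s) *\<^sub>R x + s *\<^sub>R y" unfolding \<gamma>_def by (simp add: algebra_simps)
    then show ?thesis using D x y that by (simp add: convex_def)
  qed
  have "sg * (h y - h x - gh x \<bullet> (y - x)) \<le> L / 2 * norm (y - x) ^ 2" if sg: "sg = 1 \<or> sg = -1" for sg :: real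
  proof -
    define \<psi> where "\<psi> s = sg * (h (\<gamma> s) - s * (gh x \<bullet> (y - x))) - L / 2 * s^2 * norm (y - x)^2" for s
    define \<psi>' where "\<psi>' s = (\<lambda>t. t * (sg * (gh (\<gamma> s) \<bullet> (y - x) - gh x \<bullet> (y - x)) - L * s * norm (y - x)^2))" for s
    have "(\<psi> has_derivative \<psi>' s) (at s within {0..1})" if s: "0 \<le> s" "s \<le> 1" for s
    proof -
      have g1: "(\<gamma> has_derivative (\<lambda>t. t *\<^sub>R (y - x))) (at s within {0..1})"
        unfolding \<gamma>_def by (auto intro!: derivative_eq_intros)
      have "(h has_derivative (\<lambda>v. gh (\<gamma> s) \<bullet> v)) (at (\<gamma> s) within \<gamma> ` {0..1})"
        by (rule has_derivative_subset[OF hd[OF \<gamma>D[OF s]]]) (use \<gamma>D in auto)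
      from diff_chain_within[OF g1 this]
      have g2: "((\<lambda>s. h (\<gamma> s)) has_derivative (\<lambda>t. t * (gh (\<gamma> s) \<bullet> (y - x)))) (at s within {0..1})"
        by (simp add: o_def)
      show ?thesis unfolding \<psi>_def \<psi>'_def
        by (rule derivative_eq_intros g2 | simp)+ (simp add: algebra_simps power2_eq_square)
    qed
    then obtain \<xi> where \<xi>: "\<xi> \<in> {0..1}" and mvt: "\<psi> 1 - \<psi> 0 = \<psi>' \<xi> (1 - 0)"
      using mvt_very_simple[of 0 1 \<psi> \<psi>'] by force
    have "\<bar>(gh (\<gamma> \<xi>) - gh x) \<bullet> (y - x)\<bar> \<le> norm (gh (\<gamma> \<xi>) - gh x) * norm (y - x)"
      by (rule Cauchy_Schwarz_ineq2)
    then have "sg * ((gh (\<gamma> \<xi>) - gh x) \<bullet> (y - x)) \<le> norm (gh (\<gamma> \<xi>) - gh x) * norm (y - x)"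
      using sg by (auto simp: abs_le_iff)
    also have "\<dots> \<le> L * norm (\<gamma> \<xi> - x) * norm (y - x)"
      using lip[OF \<gamma>D x] \<xi> by (auto intro: mult_right_mono)
    also have "norm (\<gamma> \<xi> - x) = \<xi> * norm (y - x)" using \<xi> unfolding \<gamma>_def by simp
    finally have "\<psi>' \<xi> 1 \<le> 0" unfolding \<psi>'_def by (simp add: algebra_simps power2_eq_square inner_diff_left)
    then have "\<psi> 1 \<le> \<psi> 0" using mvt by simp
    then show ?thesis unfolding \<psi>_def \<gamma>_def by (simp add: algebra_simps)
  qed
  from this[of 1] this[of "-1"] show ?thesis by (intro abs_leI) simp_all
qed

section \<open>Proximal maps and the Moreau envelope\<close>

lemma prox_of_minimal:
  assumes "\<exists>u. \<forall>v. g u + ereal (norm (u - z)^2 / (2 * \<gamma>)) \<le> g v + ereal (norm (v - z)^2 / (2 * \<gamma>))"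
  shows "g (prox_of g \<gamma> z) + ereal (norm (prox_of g \<gamma> z - z)^2 / (2 * \<gamma>))
           \<le> g v + ereal (norm (v - z)^2 / (2 * \<gamma>))"
  using someI_ex[OF assms] unfolding prox_of_def by blast

lemma moreau_eq_minimal:
  assumes "\<And>v. g u + ereal (norm (u - x)^2 / (2 * \<gamma>)) \<le> g v + ereal (norm (v - x)^2 / (2 * \<gamma>))"
  shows "moreau g \<gamma> x = g u + ereal (norm (u - x)^2 / (2 * \<gamma>))"
  unfolding moreau_def by (rule antisym[OF INF_lower INF_greatest]) (use assms in auto)

lemma norm_add_scaleR_sq:
  fixes a b :: "'a::real_inner"
  shows "norm (a + s *\<^sub>R b) ^ 2 = norm a ^ 2 + 2 * s * (a \<bullet> b) + s^2 * norm b ^ 2"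
  by (simp only: power2_norm_eq_inner)
    (simp add: inner_add_left inner_add_right inner_commute algebra_simps power2_eq_square)

lemma norm_diff_sq_ge:
  fixes x w :: "'a::real_inner"
  shows "norm x ^ 2 - 2 * (norm x * norm w) \<le> norm (x - w) ^ 2"
proof -
  have "norm (x - w) ^ 2 = norm x ^ 2 - 2 * (x \<bullet> w) + norm w ^ 2"
    by (simp add: power2_norm_eq_inner inner_diff_left inner_diff_right inner_commute)
  then show ?thesis using norm_cauchy_schwarz[of x w] by (smt (verit) zero_le_power2)
qed

lemma norm_add_sq_le:
  fixes p q :: "'a::real_normed_vector"
  shows "norm (p + q)^2 \<le> 2 * norm p ^ 2 + 2 * norm q ^ 2"
proof -
  have "norm (p + q)^2 \<le> (norm p + norm q)^2" by (intro power_mono norm_triangle_ineq) auto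
  also have "\<dots> \<le> 2 * norm p ^ 2 + 2 * norm q ^ 2"
    using zero_le_power2[of "norm p - norm q"] by (simp add: power2_eq_square algebra_simps)
  finally show ?thesis .
qed

lemma inner_add_nonpos_imp_norm_le:
  fixes a b :: "'a::real_inner"
  assumes "(a + b) \<bullet> a \<le> 0"
  shows "norm a \<le> norm b"
proof -
  have "norm a ^ 2 \<le> - (b \<bullet> a)" using assms by (simp add: inner_add_left power2_norm_eq_inner)
  also have "\<dots> \<le> norm b * norm a" using norm_cauchy_schwarz[of "-b" a] by simp
  finally have "norm a * norm a \<le> norm b * norm a" by (simp add: power2_eq_square)
  then show ?thesis by (cases "a = 0") (auto simp: mult_le_cancel_right)
qed

locale prox_setting =
  fixes r :: "'a::euclidean_space \<Rightarrow> ereal" and f :: "'n::finite \<Rightarrow> 'a \<Rightarrow> real"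
    and gf :: "'n \<Rightarrow> 'a \<Rightarrow> 'a" and \<phi> :: "'a \<Rightarrow> ereal" and L \<eta> lam :: real
  assumes r_cvx: "closed_proper_convex r"
    and f_grad: "\<And>i x. x \<in> edom r \<Longrightarrow> (f i has_derivative (\<lambda>h. gf i x \<bullet> h)) (at x within edom r)"
    and f_smooth: "\<And>i x y. x \<in> edom r \<Longrightarrow> y \<in> edom r \<Longrightarrow> norm (gf i x - gf i y) \<le> L * norm (x - y)"
    and phi_def: "\<And>x. \<phi> x = ereal ((1 / real CARD('n)) * (\<Sum>i\<in>UNIV. f i x)) + r x"
    and phi_lb: "\<exists>c. \<forall>x. ereal c \<le> \<phi> x"
    and L_pos: "L > 0"
    and eta_pos: "\<eta> > 0"
    and lam_pos: "lam > 0"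
    and eta_le: "\<eta> \<le> lam"
    and lam_le: "lam \<le> 1 / (4 * L)"
begin

definition "rval x = real_of_ereal (r x)"
definition "fmean x = (1 / real CARD('n)) * (\<Sum>i\<in>UNIV. f i x)"
definition "gmean x = (1 / real CARD('n)) *\<^sub>R (\<Sum>i\<in>UNIV. gf i x)"
definition "prox_r w = prox_of r \<eta> w"
definition "prox_phi x = prox_of \<phi> lam x"
definition "env x = real_of_ereal (moreau \<phi> lam x)"

lemma lam_L_le: "lam * L \<le> 1 / 4"
  using lam_le L_pos by (simp add: field_simps)

lemma eta_L_le: "\<eta> * L \<le> 1 / 4"
  using lam_L_le eta_le L_pos by (meson dual_order.trans mult_right_mono less_imp_le)

lemma convex_edom: "convex (edom r)"
  by (rule closed_proper_convex_convex_edom[OF r_cvx])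

lemma r_eq_rval: "x \<in> edom r \<Longrightarrow> r x = ereal (rval x)"
  unfolding rval_def by (rule closed_proper_convex_finite[OF r_cvx])

lemma phi_eq: "x \<in> edom r \<Longrightarrow> \<phi> x = ereal (fmean x + rval x)"
  unfolding phi_def fmean_def by (subst r_eq_rval) auto

lemma phi_outside: "x \<notin> edom r \<Longrightarrow> \<phi> x = \<infinity>"
  unfolding phi_def by (simp add: notin_edom_eq_infinity)

lemma phi_add_ereal: "\<phi> v + ereal b = r v + ereal (fmean v + b)"
  unfolding phi_def fmean_def by (cases "r v") auto

lemma phi_lower_bound: obtains c where "\<And>x. x \<in> edom r \<Longrightarrow> c \<le> fmean x + rval x"
proof -
  obtain c where c: "\<And>x. ereal c \<le> \<phi> x" using phi_lb by auto
  have "c \<le> fmean x + rval x" if "x \<in> edom r" for x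
    using c[of x] phi_eq[OF that] by simp
  then show ?thesis by (rule that)
qed

lemma gmean_lipschitz:
  assumes "x \<in> edom r" "y \<in> edom r"
  shows "norm (gmean x - gmean y) \<le> L * norm (x - y)"
proof -
  have "gmean x - gmean y = (1 / real CARD('n)) *\<^sub>R (\<Sum>i\<in>UNIV. gf i x - gf i y)"
    unfolding gmean_def by (simp add: sum_subtractf scaleR_diff_right)
  then have "norm (gmean x - gmean y) = (1 / real CARD('n)) * norm (\<Sum>i\<in>UNIV. gf i x - gf i y)" by simp
  also have "\<dots> \<le> (1 / real CARD('n)) * (\<Sum>i\<in>UNIV. norm (gf i x - gf i y))"
    by (intro mult_left_mono norm_sum) auto
  also have "\<dots> \<le> (1 / real CARD('n)) * (\<Sum>i\<in>(UNIV::'n set). L * norm (x - y))"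
    by (intro mult_left_mono sum_mono f_smooth assms) auto
  also have "\<dots> = L * norm (x - y)" by simp
  finally show ?thesis .
qed

lemma fmean_taylor_le:
  assumes x: "x \<in> edom r" and y: "y \<in> edom r"
  shows "\<bar>fmean y - fmean x - gmean x \<bullet> (y - x)\<bar> \<le> L / 2 * norm (y - x) ^ 2"
proof -
  have "fmean y - fmean x - gmean x \<bullet> (y - x)
      = (1 / real CARD('n)) * (\<Sum>i\<in>UNIV. f i y - f i x - gf i x \<bullet> (y - x))"
    unfolding fmean_def gmean_def
    by (simp add: sum_subtractf inner_sum_left right_diff_distrib)
  then have "\<bar>fmean y - fmean x - gmean x \<bullet> (y - x)\<bar>
      = (1 / real CARD('n)) * \<bar>\<Sum>i\<in>UNIV. f i y - f i x - gf i x \<bullet> (y - x)\<bar>"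
    by (simp add: abs_mult)
  also have "\<dots> \<le> (1 / real CARD('n)) * (\<Sum>i\<in>UNIV. \<bar>f i y - f i x - gf i x \<bullet> (y - x)\<bar>)"
    by (intro mult_left_mono sum_abs) auto
  also have "\<dots> \<le> (1 / real CARD('n)) * (\<Sum>i\<in>(UNIV::'n set). L / 2 * norm (y - x) ^ 2)"
    by (intro mult_left_mono sum_mono lipschitz_gradient_taylor_le[OF convex_edom f_grad f_smooth x y]) auto
  also have "\<dots> = L / 2 * norm (y - x) ^ 2" by simp
  finally show ?thesis .
qed

lemma fmean_upper:
  "x \<in> edom r \<Longrightarrow> y \<in> edom r \<Longrightarrow> fmean y \<le> fmean x + gmean x \<bullet> (y - x) + L / 2 * norm (y - x) ^ 2"
  using abs_le_D1[OF fmean_taylor_le[of x y]] by linarith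

lemma fmean_lower:
  "x \<in> edom r \<Longrightarrow> y \<in> edom r \<Longrightarrow> fmean x + gmean x \<bullet> (y - x) - L / 2 * norm (y - x) ^ 2 \<le> fmean y"
  using abs_le_D2[OF fmean_taylor_le[of x y]] by linarith

lemma fmean_continuous_on: "continuous_on (edom r) fmean"
proof -
  have "continuous_on (edom r) (f i)" for i by (rule has_derivative_continuous_on[OF f_grad])
  then show ?thesis unfolding fmean_def by (intro continuous_intros) auto
qed

lemma prox_r_exists:
  "\<exists>u \<in> edom r. \<forall>v. r u + ereal (norm (u - w)^2 / (2 * \<eta>)) \<le> r v + ereal (norm (v - w)^2 / (2 * \<eta>))"
proof (rule closed_proper_convex_attains_min[OF r_cvx])
  show "continuous_on (edom r) (\<lambda>x. norm (x - w)^2 / (2 * \<eta>))"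
    and "continuous_on UNIV (\<lambda>x. norm (x - w)^2 / (2 * \<eta>))"
    by (intro continuous_intros; use eta_pos in simp)+
  show "norm (x - w)^2 / (2 * \<eta>) \<le> norm (x - w)^2 / (2 * \<eta>)" for x by simp
  obtain c where c: "\<And>x. x \<in> edom r \<Longrightarrow> c \<le> fmean x + rval x" using phi_lower_bound by blast
  obtain p where p: "p \<in> edom r" using closed_proper_convex_edom_nonempty[OF r_cvx] by blast
  fix a
  show "bounded {x \<in> edom r. norm (x - w)^2 / (2 * \<eta>) + real_of_ereal (r x) \<le> a}"
  proof (rule bounded_quadratic_growthI[where \<alpha> = "1 - \<eta> * L"])
    show "1 - \<eta> * L > 0" using eta_L_le by linarith
    fix x assume "x \<in> {x \<in> edom r. norm (x - w)^2 / (2 * \<eta>) + real_of_ereal (r x) \<le> a}"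
    then have xD: "x \<in> edom r" and xa: "norm (x - w)^2 / (2 * \<eta>) + rval x \<le> a" unfolding rval_def by auto
    \<comment> \<open>\<open>r \<ge> c - fmean\<close>, and \<open>fmean\<close> grows at most quadratically with rate \<open>L / 2 < 1 / (2 \<eta>)\<close>\<close>
    have "norm (x - w)^2 / (2 * \<eta>) \<le> a - c + fmean p + gmean p \<bullet> (x - p) + L / 2 * norm (x - p) ^ 2"
      using xa c[OF xD] fmean_upper[OF p xD] by linarith
    then have h1: "norm (x - w)^2 \<le> 2 * \<eta> * (a - c + fmean p + gmean p \<bullet> (x - p) + L / 2 * norm (x - p) ^ 2)"
      using eta_pos by (simp add: pos_divide_le_eq mult.commute)
    have "gmean p \<bullet> (x - p) \<le> norm (gmean p) * (norm x + norm p)"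
      using norm_cauchy_schwarz[of "gmean p" "x - p"] norm_triangle_ineq4[of x p]
      by (meson mult_left_mono norm_ge_zero order_trans)
    then have h2: "\<eta> * (gmean p \<bullet> (x - p)) \<le> \<eta> * (norm (gmean p) * (norm x + norm p))"
      using eta_pos by (intro mult_left_mono) auto
    have "norm (x - p) ^ 2 \<le> (norm x + norm p) ^ 2"
      by (intro power_mono norm_triangle_ineq4) auto
    then have h3: "\<eta> * (L * norm (x - p) ^ 2) \<le> \<eta> * (L * (norm x ^ 2 + 2 * (norm x * norm p) + norm p ^ 2))"
      using eta_pos L_pos by (intro mult_left_mono) (auto simp: power2_sum)
    show "(1 - \<eta> * L) * norm x ^ 2 \<le> (2 * norm w + 2 * \<eta> * norm (gmean p) + 2 * \<eta> * L * norm p) * norm x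
            + (2 * \<eta> * (a - c + fmean p + norm (gmean p) * norm p) + \<eta> * L * norm p ^ 2)"
      using h1 h2 h3 norm_diff_sq_ge[of x w] by (simp add: algebra_simps)
  qed
qed

lemma prox_r_minimal:
  "r (prox_r w) + ereal (norm (prox_r w - w)^2 / (2 * \<eta>)) \<le> r v + ereal (norm (v - w)^2 / (2 * \<eta>))"
  unfolding prox_r_def by (rule prox_of_minimal) (use prox_r_exists in blast)

lemma prox_r_in_edom: "prox_r w \<in> edom r"
proof -
  obtain u where u: "u \<in> edom r" using prox_r_exists by blast
  have "r (prox_r w) + ereal (norm (prox_r w - w)^2 / (2 * \<eta>)) \<le> r u + ereal (norm (u - w)^2 / (2 * \<eta>))"
    by (rule prox_r_minimal)
  also have "\<dots> < \<infinity>" using r_eq_rval[OF u] by simp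
  finally show ?thesis unfolding edom_def by (cases "r (prox_r w)") auto
qed

lemma prox_phi_exists:
  "\<exists>u \<in> edom r. \<forall>v. r u + ereal (fmean u + norm (u - x)^2 / (2 * lam)) \<le> r v + ereal (fmean v + norm (v - x)^2 / (2 * lam))"
proof -
  obtain c where c: "\<And>x. x \<in> edom r \<Longrightarrow> c \<le> fmean x + rval x" using phi_lower_bound by blast
  obtain p where p: "p \<in> edom r" using closed_proper_convex_edom_nonempty[OF r_cvx] by blast
  show ?thesis
  proof (rule closed_proper_convex_attains_min[OF r_cvx,
        where \<psi> = "\<lambda>y. fmean p + gmean p \<bullet> (y - p) - L / 2 * norm (y - p) ^ 2 + norm (y - x)^2 / (2 * lam)"])
    show "continuous_on (edom r) (\<lambda>y. fmean y + norm (y - x)^2 / (2 * lam))"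
      using lam_pos by (intro continuous_intros fmean_continuous_on) auto
    show "continuous_on UNIV (\<lambda>y. fmean p + gmean p \<bullet> (y - p) - L / 2 * norm (y - p) ^ 2 + norm (y - x)^2 / (2 * lam))"
      using lam_pos by (intro continuous_intros) auto
    show "fmean p + gmean p \<bullet> (y - p) - L / 2 * norm (y - p) ^ 2 + norm (y - x)^2 / (2 * lam)
        \<le> fmean y + norm (y - x)^2 / (2 * lam)" if "y \<in> edom r" for y
      using fmean_lower[OF p that] by linarith
    fix a
    show "bounded {y \<in> edom r. fmean y + norm (y - x)^2 / (2 * lam) + real_of_ereal (r y) \<le> a}"
    proof (rule bounded_quadratic_growthI[where \<alpha> = 1])
      fix y assume "y \<in> {y \<in> edom r. fmean y + norm (y - x)^2 / (2 * lam) + real_of_ereal (r y) \<le> a}"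
      then have yD: "y \<in> edom r" and ya: "fmean y + norm (y - x)^2 / (2 * lam) + rval y \<le> a"
        unfolding rval_def by auto
      have "norm (y - x)^2 / (2 * lam) \<le> a - c" using ya c[OF yD] by linarith
      then have "norm (y - x)^2 \<le> 2 * lam * (a - c)" using lam_pos by (simp add: pos_divide_le_eq mult.commute)
      then show "1 * norm y ^ 2 \<le> (2 * norm x) * norm y + 2 * lam * (a - c)"
        using norm_diff_sq_ge[of y x] by (simp add: algebra_simps)
    qed simp
  qed
qed

lemma prox_phi_minimal:
  "\<phi> (prox_phi x) + ereal (norm (prox_phi x - x)^2 / (2 * lam)) \<le> \<phi> v + ereal (norm (v - x)^2 / (2 * lam))"
  unfolding prox_phi_def by (rule prox_of_minimal) (use prox_phi_exists in \<open>auto simp: phi_add_ereal\<close>)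

lemma prox_phi_minimal_r:
  "r (prox_phi x) + ereal (fmean (prox_phi x) + norm (prox_phi x - x)^2 / (2 * lam))
     \<le> r v + ereal (fmean v + norm (v - x)^2 / (2 * lam))"
  using prox_phi_minimal[of x v] unfolding phi_add_ereal .

lemma prox_phi_in_edom: "prox_phi x \<in> edom r"
proof -
  obtain u where u: "u \<in> edom r" using prox_phi_exists by blast
  have "\<phi> (prox_phi x) + ereal (norm (prox_phi x - x)^2 / (2 * lam)) \<le> \<phi> u + ereal (norm (u - x)^2 / (2 * lam))"
    by (rule prox_phi_minimal)
  also have "\<dots> < \<infinity>" using phi_eq[OF u] by simp
  finally show ?thesis using phi_outside by fastforce
qed

lemma env_eq: "env x = fmean (prox_phi x) + rval (prox_phi x) + norm (prox_phi x - x)^2 / (2 * lam)"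
  unfolding env_def moreau_eq_minimal[OF prox_phi_minimal] phi_eq[OF prox_phi_in_edom] by simp

lemma env_le:
  assumes "y \<in> edom r"
  shows "env x \<le> fmean y + rval y + norm (y - x)^2 / (2 * lam)"
proof -
  have "ereal (env x) = \<phi> (prox_phi x) + ereal (norm (prox_phi x - x)^2 / (2 * lam))"
    unfolding env_eq phi_eq[OF prox_phi_in_edom] by simp
  also have "\<dots> \<le> \<phi> y + ereal (norm (y - x)^2 / (2 * lam))" by (rule prox_phi_minimal)
  also have "\<dots> = ereal (fmean y + rval y + norm (y - x)^2 / (2 * lam))" using phi_eq[OF assms] by simp
  finally show ?thesis by simp
qed

lemma prox_r_variational_ineq:
  assumes v: "v \<in> edom r"
  shows "rval (prox_r w) - ((1 / \<eta>) *\<^sub>R (prox_r w - w)) \<bullet> (v - prox_r w) \<le> rval v"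
  unfolding rval_def
proof (rule closed_proper_convex_min_variational_ineq[OF r_cvx prox_r_in_edom v prox_r_minimal])
  fix s :: real
  let ?u = "prox_r w"
  have "norm (?u + s *\<^sub>R (v - ?u) - w)^2 = norm (?u - w) ^ 2 + 2 * s * ((?u - w) \<bullet> (v - ?u)) + s^2 * norm (v - ?u) ^ 2"
    using norm_add_scaleR_sq[of "?u - w" s "v - ?u"] by (simp add: algebra_simps)
  then show "norm (?u + s *\<^sub>R (v - ?u) - w)^2 / (2 * \<eta>) \<le> norm (?u - w)^2 / (2 * \<eta>)
      + s * (((1 / \<eta>) *\<^sub>R (?u - w)) \<bullet> (v - ?u)) + s^2 * (norm (v - ?u)^2 / (2 * \<eta>))"
    unfolding inner_scaleR_left using eta_pos by (simp add: field_simps)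
qed

lemma prox_phi_variational_ineq:
  assumes v: "v \<in> edom r"
  shows "rval (prox_phi x) - (gmean (prox_phi x) + (1 / lam) *\<^sub>R (prox_phi x - x)) \<bullet> (v - prox_phi x) \<le> rval v"
  unfolding rval_def
proof (rule closed_proper_convex_min_variational_ineq[OF r_cvx prox_phi_in_edom v prox_phi_minimal_r,
      where K = "(L / 2 + 1 / (2 * lam)) * norm (v - prox_phi x)^2"])
  fix s :: real assume s0: "0 < s" and s1: "s \<le> 1"
  let ?u = "prox_phi x"
  have "?u + s *\<^sub>R (v - ?u) = (1 - s) *\<^sub>R ?u + s *\<^sub>R v" by (simp add: algebra_simps)
  then have "?u + s *\<^sub>R (v - ?u) \<in> edom r"
    using convex_edom prox_phi_in_edom v s0 s1 by (simp add: convex_def)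
  from fmean_upper[OF prox_phi_in_edom[of x] this]
  have "fmean (?u + s *\<^sub>R (v - ?u)) \<le> fmean ?u + gmean ?u \<bullet> (s *\<^sub>R (v - ?u)) + L / 2 * norm (s *\<^sub>R (v - ?u))^2"
    by simp
  moreover have "norm (s *\<^sub>R (v - ?u))^2 = s^2 * norm (v - ?u)^2" by (simp add: power_mult_distrib)
  ultimately have f1: "fmean (?u + s *\<^sub>R (v - ?u)) \<le> fmean ?u + s * (gmean ?u \<bullet> (v - ?u)) + s^2 * (L / 2 * norm (v - ?u)^2)"
    by (simp add: algebra_simps)
  have "norm (?u + s *\<^sub>R (v - ?u) - x)^2 = norm (?u - x) ^ 2 + 2 * s * ((?u - x) \<bullet> (v - ?u)) + s^2 * norm (v - ?u) ^ 2"
    using norm_add_scaleR_sq[of "?u - x" s "v - ?u"] by (simp add: algebra_simps)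
  then have f2: "norm (?u + s *\<^sub>R (v - ?u) - x)^2 / (2 * lam) = norm (?u - x)^2 / (2 * lam)
      + s * (((1 / lam) *\<^sub>R (?u - x)) \<bullet> (v - ?u)) + s^2 * (norm (v - ?u)^2 / (2 * lam))"
    unfolding inner_scaleR_left using lam_pos by (simp add: field_simps)
  show "fmean (?u + s *\<^sub>R (v - ?u)) + norm (?u + s *\<^sub>R (v - ?u) - x)^2 / (2 * lam)
     \<le> fmean ?u + norm (?u - x)^2 / (2 * lam) + s * ((gmean ?u + (1 / lam) *\<^sub>R (?u - x)) \<bullet> (v - ?u))
       + s^2 * ((L / 2 + 1 / (2 * lam)) * norm (v - ?u)^2)"
    using f1 f2 by (simp add: inner_add_left algebra_simps)
qed

lemma prox_r_nonexpansive: "norm (prox_r w - prox_r w') \<le> norm (w - w')"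
proof -
  define u u' where "u = prox_r w" and "u' = prox_r w'"
  have "rval u - ((1 / \<eta>) *\<^sub>R (u - w)) \<bullet> (u' - u) \<le> rval u'"
    and "rval u' - ((1 / \<eta>) *\<^sub>R (u' - w')) \<bullet> (u - u') \<le> rval u"
    unfolding u_def u'_def by (intro prox_r_variational_ineq prox_r_in_edom)+
  then have "(1 / \<eta>) * (((u - u') + (w' - w)) \<bullet> (u - u')) \<le> 0"
    by (simp add: inner_add_left inner_diff_left inner_diff_right algebra_simps)
  then have "((u - u') + (w' - w)) \<bullet> (u - u') \<le> 0" using eta_pos by (auto simp: divide_le_0_iff)
  from inner_add_nonpos_imp_norm_le[OF this] show ?thesis unfolding u_def u'_def by (simp add: norm_minus_commute)
qed

text \<open>\<open>\<phi>\<close> is only weakly convex, so \<open>prox_phi\<close> need not be non-expansive; its Lipschitz constant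
  is \<open>1 / (1 - lam L) \<le> 4 / 3\<close>.\<close>
lemma prox_phi_lipschitz: "norm (prox_phi x - prox_phi x') \<le> 4 / 3 * norm (x - x')"
proof -
  define u u' where "u = prox_phi x" and "u' = prox_phi x'"
  define \<delta> where "\<delta> = u - u'"
  have uD: "u \<in> edom r" and u'D: "u' \<in> edom r" unfolding u_def u'_def by (rule prox_phi_in_edom)+
  have "rval u - (gmean u + (1 / lam) *\<^sub>R (u - x)) \<bullet> (u' - u) \<le> rval u'"
    and "rval u' - (gmean u' + (1 / lam) *\<^sub>R (u' - x')) \<bullet> (u - u') \<le> rval u"
    unfolding u_def u'_def by (intro prox_phi_variational_ineq prox_phi_in_edom)+
  then have "(1 / lam) * (\<delta> \<bullet> \<delta>) \<le> (1 / lam) * ((x - x') \<bullet> \<delta>) + (gmean u' - gmean u) \<bullet> \<delta>"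
    unfolding \<delta>_def by (simp add: inner_add_left inner_diff_left inner_diff_right algebra_simps)
  also have "(x - x') \<bullet> \<delta> \<le> norm (x - x') * norm \<delta>" by (rule norm_cauchy_schwarz)
  also have "(gmean u' - gmean u) \<bullet> \<delta> \<le> norm (gmean u' - gmean u) * norm \<delta>" by (rule norm_cauchy_schwarz)
  also have "\<dots> \<le> L * norm \<delta> * norm \<delta>"
    using gmean_lipschitz[OF u'D uD] unfolding \<delta>_def by (intro mult_right_mono) (auto simp: norm_minus_commute)
  finally have "norm \<delta> * norm \<delta> \<le> norm (x - x') * norm \<delta> + (lam * L) * (norm \<delta> * norm \<delta>)"
    using lam_pos by (simp add: dot_square_norm power2_eq_square field_simps)
  moreover have "(lam * L) * (norm \<delta> * norm \<delta>) \<le> (1 / 4) * (norm \<delta> * norm \<delta>)"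
    using lam_L_le by (intro mult_right_mono) auto
  ultimately have "(3 / 4 * norm \<delta>) * norm \<delta> \<le> norm (x - x') * norm \<delta>" by linarith
  then have "3 / 4 * norm \<delta> \<le> norm (x - x')" by (cases "\<delta> = 0") (auto simp: mult_le_cancel_right)
  then show ?thesis unfolding \<delta>_def u_def u'_def by linarith
qed

text \<open>By its optimality condition, \<open>u = prox_phi x\<close> satisfies
  \<open>u = prox_r (u - \<eta> (gmean u + (u - x) / lam))\<close>; the bound is the non-expansiveness of \<open>prox_r\<close>
  between this point and \<open>w\<close>.\<close>
lemma prox_phi_prox_r_dist_le:
  "norm (prox_phi x - prox_r w)
     \<le> norm (w - (prox_phi x - \<eta> *\<^sub>R (gmean (prox_phi x) + (1 / lam) *\<^sub>R (prox_phi x - x))))"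
proof -
  define u z where "u = prox_phi x" and "z = prox_r w"
  define d where "d = gmean u + (1 / lam) *\<^sub>R (u - x)"
  have "rval u - d \<bullet> (z - u) \<le> rval z"
    unfolding u_def z_def d_def by (intro prox_phi_variational_ineq prox_r_in_edom)
  moreover have "rval z - ((1 / \<eta>) *\<^sub>R (z - w)) \<bullet> (u - z) \<le> rval u"
    unfolding u_def z_def by (intro prox_r_variational_ineq prox_phi_in_edom)
  ultimately have "(1 / \<eta>) * (((u - z) + (w - (u - \<eta> *\<^sub>R d))) \<bullet> (u - z)) \<le> 0"
    using eta_pos by (simp add: inner_add_left inner_diff_left inner_diff_right algebra_simps)
  then have "((u - z) + (w - (u - \<eta> *\<^sub>R d))) \<bullet> (u - z) \<le> 0" using eta_pos by (auto simp: divide_le_0_iff)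
  from inner_add_nonpos_imp_norm_le[OF this] show ?thesis unfolding u_def z_def d_def .
qed

lemma prox_r_continuous: "continuous_on UNIV prox_r"
  by (rule lipschitz_on_continuous_on[of 1]) (auto simp: lipschitz_on_def dist_norm prox_r_nonexpansive)

lemma prox_phi_continuous: "continuous_on UNIV prox_phi"
  by (rule lipschitz_on_continuous_on[of "4/3"])
    (use prox_phi_lipschitz in \<open>auto simp: lipschitz_on_def dist_norm\<close>)

lemma env_continuous: "continuous_on UNIV env"
proof -
  have "isCont env x" for x
  proof -
    let ?u = prox_phi
    have up: "env y \<le> env x + (norm (?u x - y)^2 - norm (?u x - x)^2) / (2 * lam)" for y
      using env_le[OF prox_phi_in_edom[of x], of y] env_eq[of x] by (simp add: diff_divide_distrib)
    have lo: "env x + (norm (?u y - y)^2 - norm (?u y - x)^2) / (2 * lam) \<le> env y" for y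
      using env_le[OF prox_phi_in_edom[of y], of x] env_eq[of y] by (simp add: diff_divide_distrib)
    have "(?u \<longlongrightarrow> ?u x) (at x)"
      using prox_phi_continuous by (simp add: continuous_on_eq_continuous_at isCont_def)
    then have "((\<lambda>y. env x + (norm (?u y - y)^2 - norm (?u y - x)^2) / (2 * lam))
        \<longlongrightarrow> env x + (norm (?u x - x)^2 - norm (?u x - x)^2) / (2 * lam)) (at x)"
      using lam_pos by (intro tendsto_intros) auto
    moreover have "((\<lambda>y. env x + (norm (?u x - y)^2 - norm (?u x - x)^2) / (2 * lam))
        \<longlongrightarrow> env x + (norm (?u x - x)^2 - norm (?u x - x)^2) / (2 * lam)) (at x)"
      using lam_pos by (intro tendsto_intros) auto
    ultimately have "(env \<longlongrightarrow> env x) (at x)"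
      by (intro tendsto_sandwich[of "\<lambda>y. env x + (norm (?u y - y)^2 - norm (?u y - x)^2) / (2 * lam)" env _
            "\<lambda>y. env x + (norm (?u x - y)^2 - norm (?u x - x)^2) / (2 * lam)"]) (use up lo in auto)
    then show ?thesis by (simp add: isCont_def)
  qed
  then show ?thesis by (simp add: continuous_at_imp_continuous_on)
qed

end

section \<open>One step of the iteration\<close>

lemma weighted_sum_norm_sq_eq:
  fixes u :: "'i \<Rightarrow> 'a::real_inner"
  assumes w1: "sum w I = 1"
  shows "(\<Sum>j\<in>I. w j * norm (u j - c)^2)
       = (\<Sum>j\<in>I. w j * norm (u j - (\<Sum>k\<in>I. w k *\<^sub>R u k))^2) + norm ((\<Sum>k\<in>I. w k *\<^sub>R u k) - c)^2"
proof -
  define ub where "ub = (\<Sum>k\<in>I. w k *\<^sub>R u k)"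
  have "(\<Sum>j\<in>I. w j *\<^sub>R (u j - ub)) = ub - (\<Sum>j\<in>I. w j) *\<^sub>R ub"
    unfolding ub_def by (simp add: scaleR_diff_right sum_subtractf scaleR_sum_left)
  also have "\<dots> = 0" using w1 by simp
  finally have "(\<Sum>j\<in>I. w j *\<^sub>R (u j - ub)) \<bullet> (ub - c) = 0" by simp
  then have cross: "(\<Sum>j\<in>I. w j * ((u j - ub) \<bullet> (ub - c))) = 0"
    by (simp add: inner_sum_left)
  have "norm (u j - c)^2 = norm ((u j - ub) + 1 *\<^sub>R (ub - c))^2" for j by (simp add: algebra_simps)
  then have "norm (u j - c)^2 = norm (u j - ub)^2 + 2 * ((u j - ub) \<bullet> (ub - c)) + norm (ub - c)^2" for j
    unfolding norm_add_scaleR_sq by simp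
  then have "w j * norm (u j - c)^2 = w j * norm (u j - ub)^2 + 2 * (w j * ((u j - ub) \<bullet> (ub - c))) + w j * norm (ub - c)^2" for j
    by (simp only: ring_distribs mult.left_commute)
  then have "(\<Sum>j\<in>I. w j * norm (u j - c)^2) = (\<Sum>j\<in>I. w j * norm (u j - ub)^2)
      + 2 * (\<Sum>j\<in>I. w j * ((u j - ub) \<bullet> (ub - c))) + (\<Sum>j\<in>I. w j) * norm (ub - c)^2"
    by (simp add: sum.distrib sum_distrib_left sum_distrib_right)
  then show ?thesis using cross w1 unfolding ub_def by simp
qed

lemma weighted_sum_norm_sq_le:
  fixes u :: "'i \<Rightarrow> 'a::real_inner"
  assumes "sum w I = 1"
  shows "(\<Sum>j\<in>I. w j * norm (u j - (\<Sum>k\<in>I. w k *\<^sub>R u k))^2) \<le> (\<Sum>j\<in>I. w j * norm (u j - c)^2)"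
  using weighted_sum_norm_sq_eq[OF assms, of u c] by simp

lemma norm_convex_combination_sq_le:
  fixes u :: "'i \<Rightarrow> 'a::real_inner"
  assumes "sum w I = 1" and "\<And>j. j \<in> I \<Longrightarrow> w j \<ge> 0"
  shows "norm (\<Sum>k\<in>I. w k *\<^sub>R u k)^2 \<le> (\<Sum>j\<in>I. w j * norm (u j)^2)"
proof -
  have "0 \<le> (\<Sum>j\<in>I. w j * norm (u j - (\<Sum>k\<in>I. w k *\<^sub>R u k))^2)"
    using assms(2) by (intro sum_nonneg mult_nonneg_nonneg) auto
  then show ?thesis using weighted_sum_norm_sq_eq[OF assms(1), of u 0] by simp
qed

lemma norm_add4_sq_le:
  fixes e \<delta> \<gamma> y :: "'a::real_inner"
  shows "norm (e + \<delta> + \<gamma> + y)^2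
    \<le> 2 * norm e ^ 2 + 4 * (e \<bullet> (\<delta> + \<gamma>)) + 4 * norm \<delta> ^ 2 + 4 * norm \<gamma> ^ 2 + 2 * norm y ^ 2"
proof -
  have "norm (e + \<delta> + \<gamma> + y)^2 \<le> 2 * norm (e + (\<delta> + \<gamma>))^2 + 2 * norm y ^ 2"
    using norm_add_sq_le[of "e + (\<delta> + \<gamma>)" y] by (simp add: add.assoc)
  also have "norm (e + (\<delta> + \<gamma>))^2 = norm e ^ 2 + 2 * (e \<bullet> (\<delta> + \<gamma>)) + norm (\<delta> + \<gamma>)^2"
    using norm_add_scaleR_sq[of e 1 "\<delta> + \<gamma>"] by simp
  also have "norm (\<delta> + \<gamma>)^2 \<le> 2 * norm \<delta> ^ 2 + 2 * norm \<gamma> ^ 2" by (rule norm_add_sq_le)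
  finally show ?thesis by simp
qed

text \<open>This is where the step size condition \<open>lam \<le> 1 / (4 L)\<close> enters.\<close>
lemma prox_step_coefficient_le:
  fixes \<eta> lam L :: real
  assumes eta: "0 < \<eta>" and eta_le: "\<eta> \<le> lam" and L: "0 \<le> L" and lamL: "lam * L \<le> 1 / 4"
  defines "\<kappa> \<equiv> 1 - \<eta> / lam"
  shows "\<kappa>^2 + (\<eta> / lam) * \<kappa> + 2 * \<kappa> * (\<eta> * L) + 4 * (\<eta> * L)^2 - 1 \<le> - (\<eta> / (2 * lam))"
proof -
  define \<rho> where "\<rho> = \<eta> / lam"
  have lam: "0 < lam" using eta eta_le by linarith
  have \<rho>: "0 < \<rho>" "\<rho> \<le> 1" unfolding \<rho>_def using eta eta_le by auto
  have \<kappa>: "\<kappa> = 1 - \<rho>" "0 \<le> \<kappa>" unfolding \<kappa>_def \<rho>_def using \<rho> by (auto simp: \<rho>_def)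
  have "\<eta> * L = \<rho> * (lam * L)" unfolding \<rho>_def using lam by simp
  also have "\<dots> \<le> \<rho> * (1 / 4)" using \<rho> lamL by (intro mult_left_mono) auto
  finally have \<eta>L: "\<eta> * L \<le> \<rho> / 4" by simp
  have "2 * \<kappa> * (\<eta> * L) \<le> 2 * \<kappa> * (\<rho> / 4)" using \<eta>L \<kappa> by (intro mult_left_mono) auto
  moreover have "(\<eta> * L)^2 \<le> (\<rho> / 4)^2" using \<eta>L eta L by (intro power_mono) auto
  moreover have "\<kappa>^2 + \<rho> * \<kappa> - 1 = - \<rho>" and "2 * \<kappa> * (\<rho> / 4) + 4 * (\<rho> / 4)^2 = \<rho> / 2 - \<rho>^2 / 4"
    unfolding \<kappa>(1) by (simp_all add: algebra_simps power2_eq_square)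
  ultimately have "\<kappa>^2 + \<rho> * \<kappa> + 2 * \<kappa> * (\<eta> * L) + 4 * (\<eta> * L)^2 - 1 \<le> - (\<rho> / 2)"
    using zero_le_power2[of \<rho>] by linarith
  moreover have "\<rho> / 2 = \<eta> / (2 * lam)" unfolding \<rho>_def by simp
  ultimately show ?thesis unfolding \<rho>_def[symmetric] by linarith
qed

text \<open>The algebra of one node's step: \<open>a\<close> is the gap \<open>x - prox_phi x\<close>, and the error of the
  search direction is split into a noise part \<open>e\<close>, a consensus part \<open>\<delta>\<close>, a smoothness part \<open>\<gamma>\<close>
  and a tracking part \<open>y\<close>; the shift \<open>c\<close> is free (later the gap at the average iterate).\<close>
lemma prox_step_norm_sq_le:
  fixes a e \<delta> \<gamma> y c :: "'a::real_inner" and \<eta> lam L :: real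
  assumes eta: "0 < \<eta>" and eta_le: "\<eta> \<le> lam" and L: "0 \<le> L" and lamL: "lam * L \<le> 1 / 4"
    and \<gamma>: "norm \<gamma> \<le> L * norm a"
  defines "\<kappa> \<equiv> 1 - \<eta> / lam"
  shows "norm (\<kappa> *\<^sub>R a - \<eta> *\<^sub>R (e + \<delta> + \<gamma> + y))^2 - norm a ^ 2
    \<le> - (\<eta> / (2 * lam)) * norm a ^ 2 + \<kappa> * norm (a - c)^2 + (\<eta> * \<kappa> * lam + 4 * \<eta>^2) * norm \<delta> ^ 2
       + (\<kappa> * \<eta>^2 + 2 * \<eta>^2) * norm y ^ 2
       - 2 * \<eta> * \<kappa> * (c \<bullet> y) - 2 * \<eta> * \<kappa> * (a \<bullet> e) + 4 * \<eta>^2 * (e \<bullet> (\<delta> + \<gamma>)) + 2 * \<eta>^2 * norm e ^ 2"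
proof -
  have lam: "0 < lam" using eta eta_le by linarith
  have \<kappa>: "0 \<le> \<kappa>" unfolding \<kappa>_def using eta_le lam by simp
  have "0 \<le> norm a ^ 2 + 2 * lam * (a \<bullet> \<delta>) + lam^2 * norm \<delta> ^ 2"
    by (metis norm_add_scaleR_sq zero_le_power2)
  from mult_nonneg_nonneg[OF _ this, of "\<eta> * \<kappa> / lam"]
  have "0 \<le> (\<eta> / lam) * \<kappa> * norm a ^ 2 + 2 * \<eta> * \<kappa> * (a \<bullet> \<delta>) + \<eta> * \<kappa> * lam * norm \<delta> ^ 2"
    using eta \<kappa> lam by (simp add: field_simps power2_eq_square)
  then have F\<delta>: "- 2 * \<eta> * \<kappa> * (a \<bullet> \<delta>) \<le> (\<eta> / lam) * \<kappa> * norm a ^ 2 + \<eta> * \<kappa> * lam * norm \<delta> ^ 2"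
    by linarith
  have "- (a \<bullet> \<gamma>) \<le> norm a * (L * norm a)"
    using norm_cauchy_schwarz[of a "-\<gamma>"] \<gamma> by (smt (verit) inner_minus_right mult_left_mono norm_ge_zero norm_minus_cancel)
  from mult_left_mono[OF this, of "2 * \<eta> * \<kappa>"]
  have F\<gamma>: "- 2 * \<eta> * \<kappa> * (a \<bullet> \<gamma>) \<le> 2 * \<kappa> * (\<eta> * L) * norm a ^ 2"
    using eta \<kappa> by (simp add: algebra_simps power2_eq_square)
  have "0 \<le> norm ((a - c) + \<eta> *\<^sub>R y)^2" by simp
  then have "- 2 * \<eta> * ((a - c) \<bullet> y) \<le> norm (a - c)^2 + \<eta>^2 * norm y ^ 2"
    unfolding norm_add_scaleR_sq by linarith
  from mult_left_mono[OF this \<kappa>]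
  have Fy: "- 2 * \<eta> * \<kappa> * (a \<bullet> y) \<le> \<kappa> * norm (a - c)^2 + \<kappa> * \<eta>^2 * norm y ^ 2 - 2 * \<eta> * \<kappa> * (c \<bullet> y)"
    by (simp add: inner_diff_left algebra_simps)
  have "norm \<gamma> ^ 2 \<le> L^2 * norm a ^ 2" using power_mono[OF \<gamma>, of 2] by (simp add: power_mult_distrib)
  with norm_add4_sq_le[of e \<delta> \<gamma> y]
  have "norm (e + \<delta> + \<gamma> + y)^2
      \<le> 2 * norm e ^ 2 + 4 * (e \<bullet> (\<delta> + \<gamma>)) + 4 * norm \<delta> ^ 2 + 4 * L^2 * norm a ^ 2 + 2 * norm y ^ 2"
    by simp
  from mult_left_mono[OF this, of "\<eta>^2"]
  have Fv: "\<eta>^2 * norm (e + \<delta> + \<gamma> + y)^2 \<le> 2 * \<eta>^2 * norm e ^ 2 + 4 * \<eta>^2 * (e \<bullet> (\<delta> + \<gamma>))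
      + 4 * \<eta>^2 * norm \<delta> ^ 2 + 4 * (\<eta> * L)^2 * norm a ^ 2 + 2 * \<eta>^2 * norm y ^ 2"
    by (simp add: algebra_simps power_mult_distrib)
  from mult_right_mono[OF prox_step_coefficient_le[OF eta eta_le L lamL], of "norm a ^ 2"]
  have Fa: "(\<kappa>^2 + (\<eta> / lam) * \<kappa> + 2 * \<kappa> * (\<eta> * L) + 4 * (\<eta> * L)^2 - 1) * norm a ^ 2
      \<le> - (\<eta> / (2 * lam)) * norm a ^ 2"
    unfolding \<kappa>_def by simp
  have "norm (\<kappa> *\<^sub>R a - \<eta> *\<^sub>R (e + \<delta> + \<gamma> + y))^2
      = \<kappa>^2 * norm a ^ 2 - 2 * \<eta> * \<kappa> * (a \<bullet> e + a \<bullet> \<delta> + a \<bullet> \<gamma> + a \<bullet> y) + \<eta>^2 * norm (e + \<delta> + \<gamma> + y)^2"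
    using norm_add_scaleR_sq[of "\<kappa> *\<^sub>R a" "-\<eta>" "e + \<delta> + \<gamma> + y"]
    by (simp add: inner_add_right power_mult_distrib algebra_simps)
  then show ?thesis using F\<delta> F\<gamma> Fy Fv Fa by (simp add: algebra_simps)
qed

definition avg :: "('n::finite \<Rightarrow> 'a::real_vector) \<Rightarrow> 'a" where
  "avg X = (1 / real CARD('n)) *\<^sub>R (\<Sum>j\<in>UNIV. X j)"

lemma perp_sq_avg: "perp_sq X = (\<Sum>i\<in>UNIV. norm (X i - avg X)^2)"
  unfolding perp_sq_def avg_def ..

lemma sum_diff_avg: "(\<Sum>i\<in>UNIV. X i - avg X) = 0"
  unfolding avg_def by (simp add: sum_subtractf sum_constant_scaleR)

context prox_setting
begin

definition "grad_avg X = (1 / real CARD('n)) *\<^sub>R (\<Sum>k\<in>UNIV. gf k (X k))"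

lemma fmean_convex_combination_le:
  assumes I: "finite I" and w1: "sum w I = 1" and w0: "\<And>j. j \<in> I \<Longrightarrow> w j \<ge> 0"
    and uD: "\<And>j. j \<in> I \<Longrightarrow> u j \<in> edom r"
  shows "fmean (\<Sum>k\<in>I. w k *\<^sub>R u k)
           \<le> (\<Sum>j\<in>I. w j * fmean (u j)) + L / 2 * (\<Sum>j\<in>I. w j * norm (u j - (\<Sum>k\<in>I. w k *\<^sub>R u k))^2)"
proof -
  define ub where "ub = (\<Sum>k\<in>I. w k *\<^sub>R u k)"
  have ubD: "ub \<in> edom r" unfolding ub_def by (rule convex_sum[OF I convex_edom w1 w0 uD])
  have "(\<Sum>j\<in>I. w j * (fmean ub + gmean ub \<bullet> (u j - ub) - L / 2 * norm (u j - ub) ^ 2)) \<le> (\<Sum>j\<in>I. w j * fmean (u j))"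
    using fmean_lower[OF ubD uD] w0 by (intro sum_mono mult_left_mono) auto
  moreover have "(\<Sum>j\<in>I. w j * (fmean ub + gmean ub \<bullet> (u j - ub) - L / 2 * norm (u j - ub) ^ 2))
      = (\<Sum>j\<in>I. w j) * fmean ub + gmean ub \<bullet> (\<Sum>j\<in>I. w j *\<^sub>R (u j - ub)) - L / 2 * (\<Sum>j\<in>I. w j * norm (u j - ub) ^ 2)"
    by (simp add: algebra_simps sum.distrib sum_subtractf sum_distrib_left sum_distrib_right inner_sum_right)
  moreover have "(\<Sum>j\<in>I. w j *\<^sub>R (u j - ub)) = ub - (\<Sum>j\<in>I. w j) *\<^sub>R ub"
    unfolding ub_def by (simp add: scaleR_diff_right sum_subtractf scaleR_sum_left)
  ultimately show ?thesis using w1 unfolding ub_def[symmetric] by simp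
qed

text \<open>At a convex combination of the points \<open>Z j\<close>, the Moreau envelope is estimated by
  taking the same convex combination of arbitrary points \<open>xh j\<close> in the domain as
  candidate minimiser; \<open>m\<close> is free.\<close>
lemma env_convex_combination_le:
  fixes w :: "'n \<Rightarrow> real"
  assumes w1: "sum w UNIV = 1" and w0: "\<And>j. w j \<ge> 0" and xhD: "\<And>j. xh j \<in> edom r"
  shows "env (\<Sum>j\<in>UNIV. w j *\<^sub>R Z j)
     \<le> (\<Sum>j\<in>UNIV. w j * (fmean (xh j) + rval (xh j) + norm (xh j - Z j)^2 / (2 * lam) + L / 2 * norm (xh j - m)^2))"
proof -
  define v where "v = (\<Sum>j\<in>UNIV. w j *\<^sub>R xh j)"
  have vD: "v \<in> edom r" unfolding v_def by (rule convex_sum[OF _ convex_edom w1 w0 xhD]) auto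
  have e1: "env (\<Sum>j\<in>UNIV. w j *\<^sub>R Z j) \<le> fmean v + rval v + norm (v - (\<Sum>j\<in>UNIV. w j *\<^sub>R Z j))^2 / (2 * lam)"
    using env_le[OF vD, of "\<Sum>j\<in>UNIV. w j *\<^sub>R Z j"] by (simp only: norm_minus_commute)
  have e2: "fmean v \<le> (\<Sum>j\<in>UNIV. w j * fmean (xh j)) + L / 2 * (\<Sum>j\<in>UNIV. w j * norm (xh j - v)^2)"
    unfolding v_def by (rule fmean_convex_combination_le[OF _ w1 w0 xhD]) auto
  have "(\<Sum>j\<in>UNIV. w j * norm (xh j - v)^2) \<le> (\<Sum>j\<in>UNIV. w j * norm (xh j - m)^2)"
    unfolding v_def by (rule weighted_sum_norm_sq_le[OF w1])
  then have e3: "L / 2 * (\<Sum>j\<in>UNIV. w j * norm (xh j - v)^2) \<le> L / 2 * (\<Sum>j\<in>UNIV. w j * norm (xh j - m)^2)"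
    using L_pos by (intro mult_left_mono) auto
  have "r v \<le> ereal (\<Sum>j\<in>UNIV. w j * rval (xh j))"
    unfolding v_def rval_def by (rule closed_proper_convex_jensen[OF r_cvx _ w0 w1 xhD]) auto
  then have e4: "rval v \<le> (\<Sum>j\<in>UNIV. w j * rval (xh j))" using r_eq_rval[OF vD] by simp
  have "v - (\<Sum>j\<in>UNIV. w j *\<^sub>R Z j) = (\<Sum>j\<in>UNIV. w j *\<^sub>R (xh j - Z j))"
    unfolding v_def by (simp add: scaleR_diff_right sum_subtractf)
  then have "norm (v - (\<Sum>j\<in>UNIV. w j *\<^sub>R Z j)) ^ 2 \<le> (\<Sum>j\<in>UNIV. w j * norm (xh j - Z j)^2)"
    using norm_convex_combination_sq_le[OF w1 w0] by simp
  then have e5: "norm (v - (\<Sum>j\<in>UNIV. w j *\<^sub>R Z j)) ^ 2 / (2 * lam) \<le> (\<Sum>j\<in>UNIV. w j * norm (xh j - Z j)^2) / (2 * lam)"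
    using lam_pos by (intro divide_right_mono) auto
  have "(\<Sum>j\<in>UNIV. w j * (fmean (xh j) + rval (xh j) + norm (xh j - Z j)^2 / (2 * lam) + L / 2 * norm (xh j - m)^2))
      = (\<Sum>j\<in>UNIV. w j * fmean (xh j)) + (\<Sum>j\<in>UNIV. w j * rval (xh j))
        + (\<Sum>j\<in>UNIV. w j * norm (xh j - Z j)^2) / (2 * lam) + L / 2 * (\<Sum>j\<in>UNIV. w j * norm (xh j - m)^2)"
    by (simp add: algebra_simps sum.distrib sum_distrib_left sum_divide_distrib)
  then show ?thesis using e1 e2 e3 e4 e5 by linarith
qed

lemma env_mix_le:
  fixes W :: "real^'n^'n"
  assumes W_nonneg: "\<And>i j. W $ i $ j \<ge> 0"
    and W_rows: "\<And>i. (\<Sum>j\<in>UNIV. W $ i $ j) = 1"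
    and W_cols: "\<And>j. (\<Sum>i\<in>UNIV. W $ i $ j) = 1"
  shows "(\<Sum>i\<in>UNIV. env (\<Sum>j\<in>UNIV. W $ j $ i *\<^sub>R Z j))
     \<le> (\<Sum>j\<in>UNIV. env (X j))
       + (\<Sum>j\<in>UNIV. norm (prox_phi (X j) - Z j)^2 - norm (prox_phi (X j) - X j)^2) / (2 * lam)
       + L / 2 * (\<Sum>j\<in>UNIV. norm (prox_phi (X j) - m)^2)"
proof -
  define T where "T j = fmean (prox_phi (X j)) + rval (prox_phi (X j)) + norm (prox_phi (X j) - Z j)^2 / (2 * lam)
      + L / 2 * norm (prox_phi (X j) - m)^2" for j
  have T_eq: "T j = env (X j) + (norm (prox_phi (X j) - Z j)^2 - norm (prox_phi (X j) - X j)^2) / (2 * lam)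
      + L / 2 * norm (prox_phi (X j) - m)^2" for j
    unfolding T_def env_eq by (simp add: diff_divide_distrib)
  have "(\<Sum>i\<in>UNIV. env (\<Sum>j\<in>UNIV. W $ j $ i *\<^sub>R Z j)) \<le> (\<Sum>i\<in>UNIV. \<Sum>j\<in>UNIV. W $ j $ i * T j)"
    unfolding T_def by (intro sum_mono env_convex_combination_le W_cols W_nonneg prox_phi_in_edom)
  also have "\<dots> = (\<Sum>j\<in>UNIV. T j)"
    by (subst sum.swap) (simp add: sum_distrib_right[symmetric] W_rows)
  also have "\<dots> = (\<Sum>j\<in>UNIV. env (X j))
       + (\<Sum>j\<in>UNIV. norm (prox_phi (X j) - Z j)^2 - norm (prox_phi (X j) - X j)^2) / (2 * lam)
       + L / 2 * (\<Sum>j\<in>UNIV. norm (prox_phi (X j) - m)^2)"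
    unfolding T_eq by (simp only: sum.distrib sum_divide_distrib sum_distrib_left)
  finally show ?thesis .
qed

lemma grad_avg_deviation_sq_le:
  assumes XD: "\<And>i. X i \<in> edom r"
  shows "(\<Sum>j\<in>UNIV. norm (grad_avg X - gmean (X j))^2) \<le> 4 * L^2 * perp_sq X"
proof -
  define N where "N = real CARD('n)"
  define d where "d k = norm (X k - avg X)^2" for k
  have N0: "0 < N" unfolding N_def by simp
  have node: "norm (grad_avg X - gmean (X j))^2 \<le> (\<Sum>k\<in>UNIV. (1 / N) * (2 * L^2 * (d k + d j)))" for j
  proof -
    have "grad_avg X - gmean (X j) = (\<Sum>k\<in>UNIV. (1 / N) *\<^sub>R (gf k (X k) - gf k (X j)))"
      unfolding grad_avg_def gmean_def N_def by (simp add: scaleR_sum_right sum_subtractf scaleR_diff_right)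
    then have "norm (grad_avg X - gmean (X j))^2 \<le> (\<Sum>k\<in>UNIV. (1 / N) * norm (gf k (X k) - gf k (X j))^2)"
      using norm_convex_combination_sq_le[of "\<lambda>_::'n. 1 / N" UNIV "\<lambda>k. gf k (X k) - gf k (X j)"] N0
      unfolding N_def by simp
    also have "\<dots> \<le> (\<Sum>k\<in>UNIV. (1 / N) * (2 * L^2 * (d k + d j)))"
    proof (intro sum_mono mult_left_mono)
      fix k
      have "norm (gf k (X k) - gf k (X j))^2 \<le> (L * norm (X k - X j))^2"
        using f_smooth[OF XD XD] by (intro power_mono) auto
      also have "\<dots> = L^2 * norm ((X k - avg X) + (avg X - X j))^2" by (simp add: power_mult_distrib)
      also have "\<dots> \<le> L^2 * (2 * d k + 2 * d j)"
        using norm_add_sq_le[of "X k - avg X" "avg X - X j"] norm_minus_commute[of "avg X" "X j"]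
        unfolding d_def by (intro mult_left_mono) auto
      finally show "norm (gf k (X k) - gf k (X j))^2 \<le> 2 * L^2 * (d k + d j)" by (simp add: algebra_simps)
    qed (use N0 in auto)
    finally show ?thesis .
  qed
  have "(\<Sum>j\<in>UNIV. norm (grad_avg X - gmean (X j))^2) \<le> (\<Sum>j\<in>UNIV. \<Sum>k\<in>UNIV. (1 / N) * (2 * L^2 * (d k + d j)))"
    by (rule sum_mono[OF node])
  also have "\<dots> = (2 * L^2 / N) * (\<Sum>j\<in>UNIV. \<Sum>k\<in>UNIV. d k + d j)"
    by (simp add: sum_distrib_left)
  also have "(\<Sum>j\<in>UNIV. \<Sum>k\<in>UNIV. d k + d j) = 2 * N * (\<Sum>k\<in>UNIV. d k)"
    unfolding N_def by (simp add: sum.distrib sum_distrib_left[symmetric])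
  also have "(2 * L^2 / N) * (2 * N * (\<Sum>k\<in>UNIV. d k)) = 4 * L^2 * (\<Sum>k\<in>UNIV. d k)"
    using N0 by simp
  finally show ?thesis unfolding perp_sq_avg d_def .
qed

lemma consensus_coefficient_le:
  "50 / 9 * (1 - \<eta> / lam) + 4 * L^2 * (\<eta> * (1 - \<eta> / lam) * lam + 4 * \<eta>^2) + 16 / 9 * (lam * L) \<le> 8"
proof -
  define \<kappa> where "\<kappa> = 1 - \<eta> / lam"
  have \<kappa>: "0 \<le> \<kappa>" "\<kappa> \<le> 1" unfolding \<kappa>_def using eta_le eta_pos lam_pos by (auto simp: field_simps)
  have "\<eta> * \<kappa> \<le> lam" using \<kappa> eta_le eta_pos by (metis mult_right_le_one_le less_imp_le order_trans)
  then have "L^2 * (\<eta> * \<kappa> * lam) \<le> L^2 * (lam * lam)"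
    using lam_pos by (intro mult_left_mono mult_right_mono) auto
  then have "L^2 * (\<eta> * \<kappa> * lam) \<le> (lam * L)^2" by (simp add: power2_eq_square algebra_simps)
  moreover have "L^2 * \<eta>^2 \<le> (lam * L)^2"
    using eta_le eta_pos by (simp add: power_mult_distrib mult.commute mult_left_mono power_mono)
  moreover have "(lam * L)^2 \<le> (1 / 4)^2" using lam_L_le lam_pos L_pos by (intro power_mono) auto
  ultimately show ?thesis using \<kappa> lam_L_le unfolding \<kappa>_def[symmetric] by (simp add: algebra_simps power2_eq_square)
qed

lemma consensus_error_le:
  assumes XD: "\<And>i. X i \<in> edom r"
  defines "\<kappa> \<equiv> 1 - \<eta> / lam"
  shows "\<kappa> * (\<Sum>j\<in>UNIV. norm ((X j - prox_phi (X j)) - (avg X - prox_phi (avg X)))^2)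
       + (\<eta> * \<kappa> * lam + 4 * \<eta>^2) * (\<Sum>j\<in>UNIV. norm (grad_avg X - gmean (X j))^2)
       + lam * L * (\<Sum>j\<in>UNIV. norm (prox_phi (X j) - prox_phi (avg X))^2)
     \<le> 8 * perp_sq X"
proof -
  define PX where "PX = perp_sq X"
  have \<kappa>: "0 \<le> \<kappa>" "\<kappa> \<le> 1" unfolding \<kappa>_def using eta_le eta_pos lam_pos by (auto simp: field_simps)
  have PX0: "0 \<le> PX" unfolding PX_def perp_sq_def by (simp add: sum_nonneg)
  have lip: "norm (prox_phi (X j) - prox_phi (avg X))^2 \<le> 16 / 9 * norm (X j - avg X)^2" for j
  proof -
    have "norm (prox_phi (X j) - prox_phi (avg X))^2 \<le> (4 / 3 * norm (X j - avg X))^2"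
      by (rule power_mono[OF prox_phi_lipschitz]) simp
    then show ?thesis by (simp add: power2_eq_square)
  qed
  have SM: "(\<Sum>j\<in>UNIV. norm (prox_phi (X j) - prox_phi (avg X))^2) \<le> 16 / 9 * PX"
    unfolding PX_def perp_sq_avg using sum_mono[OF lip] by (simp add: sum_distrib_left)
  have "norm ((X j - prox_phi (X j)) - (avg X - prox_phi (avg X)))^2 \<le> 50 / 9 * norm (X j - avg X)^2" for j
  proof -
    have "norm ((X j - avg X) + (- (prox_phi (X j) - prox_phi (avg X))))^2
        \<le> 2 * norm (X j - avg X)^2 + 2 * norm (prox_phi (X j) - prox_phi (avg X))^2"
      using norm_add_sq_le by (metis norm_minus_cancel)
    then show ?thesis using lip[of j] by (simp add: algebra_simps)
  qed
  then have SAC: "(\<Sum>j\<in>UNIV. norm ((X j - prox_phi (X j)) - (avg X - prox_phi (avg X)))^2) \<le> 50 / 9 * PX"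
    unfolding PX_def perp_sq_avg using sum_mono by (simp add: sum_distrib_left sum_mono)
  have SD: "(\<Sum>j\<in>UNIV. norm (grad_avg X - gmean (X j))^2) \<le> 4 * L^2 * PX"
    unfolding PX_def by (rule grad_avg_deviation_sq_le[OF XD])
  have coeff: "50 / 9 * \<kappa> + 4 * L^2 * (\<eta> * \<kappa> * lam + 4 * \<eta>^2) + 16 / 9 * (lam * L) \<le> 8"
    unfolding \<kappa>_def by (rule consensus_coefficient_le)
  have "\<kappa> * (\<Sum>j\<in>UNIV. norm ((X j - prox_phi (X j)) - (avg X - prox_phi (avg X)))^2) \<le> \<kappa> * (50 / 9 * PX)"
    using SAC \<kappa> by (intro mult_left_mono) auto
  moreover have "(\<eta> * \<kappa> * lam + 4 * \<eta>^2) * (\<Sum>j\<in>UNIV. norm (grad_avg X - gmean (X j))^2)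
      \<le> (\<eta> * \<kappa> * lam + 4 * \<eta>^2) * (4 * L^2 * PX)"
    using SD \<kappa> eta_pos lam_pos by (intro mult_left_mono) auto
  moreover have "lam * L * (\<Sum>j\<in>UNIV. norm (prox_phi (X j) - prox_phi (avg X))^2) \<le> lam * L * (16 / 9 * PX)"
    using SM lam_pos L_pos by (intro mult_left_mono) auto
  moreover have "(50 / 9 * \<kappa> + 4 * L^2 * (\<eta> * \<kappa> * lam + 4 * \<eta>^2) + 16 / 9 * (lam * L)) * PX \<le> 8 * PX"
    using coeff PX0 by (rule mult_right_mono)
  ultimately show ?thesis unfolding PX_def[symmetric] by (simp add: algebra_simps)
qed

lemma prox_step_node_le:
  assumes x: "x \<in> edom r"
  defines "\<kappa> \<equiv> 1 - \<eta> / lam" and "u \<equiv> prox_phi x"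
  shows "norm (u - prox_r (x - \<eta> *\<^sub>R (gmean x + e + \<delta> + y)))^2 - norm (x - u)^2
    \<le> - (\<eta> / (2 * lam)) * norm (x - u) ^ 2 + \<kappa> * norm ((x - u) - c)^2 + (\<eta> * \<kappa> * lam + 4 * \<eta>^2) * norm \<delta> ^ 2
       + (\<kappa> * \<eta>^2 + 2 * \<eta>^2) * norm y ^ 2 - 2 * \<eta> * \<kappa> * (c \<bullet> y) - 2 * \<eta> * \<kappa> * ((x - u) \<bullet> e)
       + 4 * \<eta>^2 * (e \<bullet> (\<delta> + (gmean x - gmean u))) + 2 * \<eta>^2 * norm e ^ 2"
proof -
  let ?\<gamma> = "gmean x - gmean u" and ?w = "x - \<eta> *\<^sub>R (gmean x + e + \<delta> + y)"
  have "norm (u - prox_r ?w) \<le> norm (?w - (u - \<eta> *\<^sub>R (gmean u + (1 / lam) *\<^sub>R (u - x))))"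
    unfolding u_def by (rule prox_phi_prox_r_dist_le)
  also have "?w - (u - \<eta> *\<^sub>R (gmean u + (1 / lam) *\<^sub>R (u - x))) = \<kappa> *\<^sub>R (x - u) - \<eta> *\<^sub>R (e + \<delta> + ?\<gamma> + y)"
    unfolding \<kappa>_def by (simp add: algebra_simps scaleR_diff_left scaleR_diff_right)
  finally have "norm (u - prox_r ?w)^2 \<le> norm (\<kappa> *\<^sub>R (x - u) - \<eta> *\<^sub>R (e + \<delta> + ?\<gamma> + y))^2"
    by (intro power_mono) auto
  moreover have "norm ?\<gamma> \<le> L * norm (x - u)"
    unfolding u_def by (rule gmean_lipschitz[OF x prox_phi_in_edom])
  from prox_step_norm_sq_le[OF eta_pos eta_le _ lam_L_le this, of e \<delta> y c] L_pos
  have "norm (\<kappa> *\<^sub>R (x - u) - \<eta> *\<^sub>R (e + \<delta> + ?\<gamma> + y))^2 - norm (x - u)^2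
    \<le> - (\<eta> / (2 * lam)) * norm (x - u) ^ 2 + \<kappa> * norm ((x - u) - c)^2 + (\<eta> * \<kappa> * lam + 4 * \<eta>^2) * norm \<delta> ^ 2
       + (\<kappa> * \<eta>^2 + 2 * \<eta>^2) * norm y ^ 2 - 2 * \<eta> * \<kappa> * (c \<bullet> y) - 2 * \<eta> * \<kappa> * ((x - u) \<bullet> e)
       + 4 * \<eta>^2 * (e \<bullet> (\<delta> + ?\<gamma>)) + 2 * \<eta>^2 * norm e ^ 2"
    unfolding \<kappa>_def by simp
  ultimately show ?thesis by linarith
qed

text \<open>The vector pairing with the averaged gradient noise in the one-step estimate;
  it depends only on the current iterate, so the pairing has zero mean.\<close>
definition "noise_coeff X = (1 / (2 * lam)) *\<^sub>R (\<Sum>j\<in>UNIV.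
    (4 * \<eta>^2) *\<^sub>R (grad_avg X - gmean (prox_phi (X j))) - (2 * \<eta> * (1 - \<eta> / lam)) *\<^sub>R (X j - prox_phi (X j)))"

lemma noise_coeff_inner:
  "2 * lam * (noise_coeff X \<bullet> e) = (\<Sum>j\<in>UNIV. 4 * \<eta>^2 * ((grad_avg X - gmean (prox_phi (X j))) \<bullet> e)
     - 2 * \<eta> * (1 - \<eta> / lam) * ((X j - prox_phi (X j)) \<bullet> e))"
  unfolding noise_coeff_def using lam_pos by (simp add: inner_sum_left inner_diff_left)

lemma prox_step_sum_le:
  assumes XD: "\<And>i. X i \<in> edom r" and sumY: "(\<Sum>i\<in>UNIV. Y i) = (\<Sum>i\<in>UNIV. g i)"
  defines "e \<equiv> (1 / real CARD('n)) *\<^sub>R (\<Sum>i\<in>UNIV. g i - gf i (X i))" and "\<kappa> \<equiv> 1 - \<eta> / lam"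
  shows "(\<Sum>j\<in>UNIV. norm (prox_phi (X j) - prox_r (X j - \<eta> *\<^sub>R Y j))^2 - norm (X j - prox_phi (X j))^2)
    \<le> - (\<eta> / (2 * lam)) * (\<Sum>j\<in>UNIV. norm (X j - prox_phi (X j))^2)
      + \<kappa> * (\<Sum>j\<in>UNIV. norm ((X j - prox_phi (X j)) - (avg X - prox_phi (avg X)))^2)
      + (\<eta> * \<kappa> * lam + 4 * \<eta>^2) * (\<Sum>j\<in>UNIV. norm (grad_avg X - gmean (X j))^2)
      + (\<kappa> * \<eta>^2 + 2 * \<eta>^2) * perp_sq Y
      + 2 * lam * (noise_coeff X \<bullet> e) + 2 * real CARD('n) * \<eta>^2 * norm e ^ 2"
proof -
  define u where "u j = prox_phi (X j)" for j
  define a where "a j = X j - u j" for j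
  define c where "c = avg X - prox_phi (avg X)"
  define \<delta> where "\<delta> j = grad_avg X - gmean (X j)" for j
  define y where "y j = Y j - avg Y" for j
  have Y_eq: "gmean (X j) + e + \<delta> j + y j = Y j" for j
  proof -
    have "avg Y = grad_avg X + e"
      unfolding avg_def grad_avg_def e_def sumY by (simp add: sum_subtractf scaleR_diff_right)
    then show ?thesis unfolding \<delta>_def y_def by (simp add: algebra_simps)
  qed
  have "(\<Sum>j\<in>UNIV. norm (u j - prox_r (X j - \<eta> *\<^sub>R Y j))^2 - norm (a j)^2)
    \<le> (\<Sum>j\<in>UNIV. - (\<eta> / (2 * lam)) * norm (a j) ^ 2 + \<kappa> * norm (a j - c)^2
       + (\<eta> * \<kappa> * lam + 4 * \<eta>^2) * norm (\<delta> j) ^ 2 + (\<kappa> * \<eta>^2 + 2 * \<eta>^2) * norm (y j) ^ 2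
       - 2 * \<eta> * \<kappa> * (c \<bullet> y j)
       + (4 * \<eta>^2 * (e \<bullet> (\<delta> j + (gmean (X j) - gmean (u j)))) - 2 * \<eta> * \<kappa> * (a j \<bullet> e))
       + 2 * \<eta>^2 * norm e ^ 2)" (is "sum ?l UNIV \<le> sum ?r UNIV")
  proof (rule sum_mono)
    fix j
    from prox_step_node_le[OF XD, of j e "\<delta> j" "y j" c] show "?l j \<le> ?r j"
      unfolding Y_eq u_def[symmetric] a_def[symmetric] \<kappa>_def[symmetric] by linarith
  qed
  also have "\<dots> = - (\<eta> / (2 * lam)) * (\<Sum>j\<in>UNIV. norm (a j)^2) + \<kappa> * (\<Sum>j\<in>UNIV. norm (a j - c)^2)
       + (\<eta> * \<kappa> * lam + 4 * \<eta>^2) * (\<Sum>j\<in>UNIV. norm (\<delta> j)^2) + (\<kappa> * \<eta>^2 + 2 * \<eta>^2) * (\<Sum>j\<in>UNIV. norm (y j)^2)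
       - 2 * \<eta> * \<kappa> * (c \<bullet> (\<Sum>j\<in>UNIV. y j))
       + (\<Sum>j\<in>UNIV. 4 * \<eta>^2 * (e \<bullet> (\<delta> j + (gmean (X j) - gmean (u j)))) - 2 * \<eta> * \<kappa> * (a j \<bullet> e))
       + 2 * real CARD('n) * \<eta>^2 * norm e ^ 2"
    by (simp add: sum.distrib sum_subtractf sum_distrib_left inner_sum_right sum_negf)
  also have "(\<Sum>j\<in>UNIV. y j) = 0" unfolding y_def by (rule sum_diff_avg)
  also have "(\<Sum>j\<in>UNIV. 4 * \<eta>^2 * (e \<bullet> (\<delta> j + (gmean (X j) - gmean (u j)))) - 2 * \<eta> * \<kappa> * (a j \<bullet> e))
      = 2 * lam * (noise_coeff X \<bullet> e)"
    unfolding noise_coeff_inner \<delta>_def a_def u_def \<kappa>_def by (simp add: inner_commute)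
  finally show ?thesis
    unfolding perp_sq_avg u_def a_def c_def \<delta>_def y_def by simp
qed

lemma env_step_le:
  fixes W :: "real^'n^'n"
  assumes W_nonneg: "\<And>i j. W $ i $ j \<ge> 0"
    and W_rows: "\<And>i. (\<Sum>j\<in>UNIV. W $ i $ j) = 1"
    and W_cols: "\<And>j. (\<Sum>i\<in>UNIV. W $ i $ j) = 1"
    and XD: "\<And>i. X i \<in> edom r" and sumY: "(\<Sum>i\<in>UNIV. Y i) = (\<Sum>i\<in>UNIV. g i)"
  defines "e \<equiv> (1 / real CARD('n)) *\<^sub>R (\<Sum>i\<in>UNIV. g i - gf i (X i))"
  shows "(\<Sum>i\<in>UNIV. env (\<Sum>j\<in>UNIV. W $ j $ i *\<^sub>R prox_r (X j - \<eta> *\<^sub>R Y j)))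
     \<le> (\<Sum>i\<in>UNIV. env (X i)) + (4 / lam) * perp_sq X + (4 * \<eta>^2 / lam) * perp_sq Y
       - (\<eta> / (4 * lam^2)) * (\<Sum>i\<in>UNIV. norm (prox_phi (X i) - X i)^2)
       + noise_coeff X \<bullet> e + (real CARD('n) * \<eta>^2 / lam) * norm e ^ 2"
proof -
  define \<kappa> where "\<kappa> = 1 - \<eta> / lam"
  define SA where "SA = (\<Sum>i\<in>UNIV. norm (prox_phi (X i) - X i)^2)"
  define D where "D = (\<Sum>j\<in>UNIV. norm (prox_phi (X j) - prox_r (X j - \<eta> *\<^sub>R Y j))^2 - norm (X j - prox_phi (X j))^2)"
  define SM where "SM = (\<Sum>j\<in>UNIV. norm (prox_phi (X j) - prox_phi (avg X))^2)"
  have SA_eq: "SA = (\<Sum>j\<in>UNIV. norm (X j - prox_phi (X j))^2)"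
    unfolding SA_def by (simp add: norm_minus_commute)
  define \<Delta> where "\<Delta> = (\<Sum>i\<in>UNIV. env (\<Sum>j\<in>UNIV. W $ j $ i *\<^sub>R prox_r (X j - \<eta> *\<^sub>R Y j))) - (\<Sum>i\<in>UNIV. env (X i))"
  have "\<Delta> \<le> D / (2 * lam) + L / 2 * SM"
    using env_mix_le[OF W_nonneg W_rows W_cols, of "\<lambda>j. prox_r (X j - \<eta> *\<^sub>R Y j)" X "prox_phi (avg X)"]
    unfolding \<Delta>_def D_def SM_def by (simp add: norm_minus_commute)
  then have "2 * lam * \<Delta> \<le> 2 * lam * (D / (2 * lam) + L / 2 * SM)"
    using lam_pos by (intro mult_left_mono) auto
  also have "\<dots> = D + lam * L * SM" using lam_pos by (simp add: field_simps)
  also have "\<dots> \<le> - (\<eta> / (2 * lam)) * SA + 8 * perp_sq X + (\<kappa> * \<eta>^2 + 2 * \<eta>^2) * perp_sq Y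
      + 2 * lam * (noise_coeff X \<bullet> e) + 2 * real CARD('n) * \<eta>^2 * norm e ^ 2"
    using prox_step_sum_le[where X = X, OF XD sumY] consensus_error_le[where X = X, OF XD]
    unfolding D_def SM_def SA_eq e_def \<kappa>_def by linarith
  also have "(\<kappa> * \<eta>^2 + 2 * \<eta>^2) * perp_sq Y \<le> 8 * \<eta>^2 * perp_sq Y"
    using eta_le eta_pos lam_pos unfolding \<kappa>_def perp_sq_def
    by (intro mult_right_mono sum_nonneg) (auto simp: field_simps)
  finally have "\<Delta> \<le> (- (\<eta> / (2 * lam)) * SA + 8 * perp_sq X + 8 * \<eta>^2 * perp_sq Y
      + 2 * lam * (noise_coeff X \<bullet> e) + 2 * real CARD('n) * \<eta>^2 * norm e ^ 2) / (2 * lam)"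
    using lam_pos by (simp add: pos_le_divide_eq mult.commute)
  also have "\<dots> = (4 / lam) * perp_sq X + (4 * \<eta>^2 / lam) * perp_sq Y - (\<eta> / (4 * lam^2)) * SA
      + noise_coeff X \<bullet> e + (real CARD('n) * \<eta>^2 / lam) * norm e ^ 2"
    using lam_pos by (simp add: field_simps power2_eq_square)
  finally show ?thesis unfolding \<Delta>_def SA_def by linarith
qed

end

section \<open>Square integrability and independence\<close>

definition square_integrable :: "'w measure \<Rightarrow> ('w \<Rightarrow> 'a::euclidean_space) \<Rightarrow> bool" where
  "square_integrable M f \<longleftrightarrow> f \<in> borel_measurable M \<and> integrable M (\<lambda>\<omega>. norm (f \<omega>)^2)"

lemma square_integrable_bound:
  assumes M: "finite_measure M" and f: "square_integrable M f" and g: "g \<in> borel_measurable M"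
    and a: "a \<ge> 0" and b: "b \<ge> 0" and bd: "\<And>\<omega>. \<omega> \<in> space M \<Longrightarrow> norm (g \<omega>) \<le> a + b * norm (f \<omega>)"
  shows "square_integrable M g"
proof -
  interpret finite_measure M by (rule M)
  have maj: "integrable M (\<lambda>\<omega>. 2 * a^2 + 2 * b^2 * norm (f \<omega>)^2)"
    using f unfolding square_integrable_def by (intro Bochner_Integration.integrable_add integrable_mult_right) auto
  have "integrable M (\<lambda>\<omega>. norm (g \<omega>)^2)"
  proof (rule Bochner_Integration.integrable_bound[OF maj])
    show "(\<lambda>\<omega>. norm (g \<omega>)^2) \<in> borel_measurable M" using g by measurable
    show "AE \<omega> in M. norm (norm (g \<omega>)^2) \<le> norm (2 * a^2 + 2 * b^2 * norm (f \<omega>)^2)"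
    proof (rule AE_I2)
      fix \<omega> assume "\<omega> \<in> space M"
      then have "norm (g \<omega>)^2 \<le> (a + b * norm (f \<omega>))^2" using bd a by (intro power_mono) auto
      also have "\<dots> \<le> 2 * a^2 + 2 * (b * norm (f \<omega>))^2"
        using zero_le_power2[of "a - b * norm (f \<omega>)"] by (simp add: power2_eq_square algebra_simps)
      finally show "norm (norm (g \<omega>)^2) \<le> norm (2 * a^2 + 2 * b^2 * norm (f \<omega>)^2)"
        by (simp add: power_mult_distrib)
    qed
  qed
  then show ?thesis using g unfolding square_integrable_def by auto
qed

lemma square_integrable_const: "finite_measure M \<Longrightarrow> square_integrable M (\<lambda>_. c)"
  unfolding square_integrable_def by (auto intro: finite_measure.integrable_const)

lemma square_integrable_add:
  assumes M: "finite_measure M" and f: "square_integrable M f" and g: "square_integrable M g"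
  shows "square_integrable M (\<lambda>\<omega>. f \<omega> + g \<omega>)"
proof -
  have fm: "f \<in> borel_measurable M" and gm: "g \<in> borel_measurable M"
    and maj: "integrable M (\<lambda>\<omega>. 2 * norm (f \<omega>)^2 + 2 * norm (g \<omega>)^2)"
    using f g unfolding square_integrable_def by (auto intro: Bochner_Integration.integrable_add integrable_mult_right)
  have m: "(\<lambda>\<omega>. f \<omega> + g \<omega>) \<in> borel_measurable M" using fm gm by measurable
  have "integrable M (\<lambda>\<omega>. norm (f \<omega> + g \<omega>)^2)"
  proof (rule Bochner_Integration.integrable_bound[OF maj])
    show "(\<lambda>\<omega>. norm (f \<omega> + g \<omega>)^2) \<in> borel_measurable M" using m by measurable
    show "AE \<omega> in M. norm (norm (f \<omega> + g \<omega>)^2) \<le> norm (2 * norm (f \<omega>)^2 + 2 * norm (g \<omega>)^2)"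
      using norm_add_sq_le by (intro AE_I2) simp
  qed
  then show ?thesis using m unfolding square_integrable_def by auto
qed

lemma square_integrable_scaleR:
  assumes M: "finite_measure M" and f: "square_integrable M f"
  shows "square_integrable M (\<lambda>\<omega>. c *\<^sub>R f \<omega>)"
proof (rule square_integrable_bound[OF M f, where a = 0 and b = "\<bar>c\<bar>"])
  show "(\<lambda>\<omega>. c *\<^sub>R f \<omega>) \<in> borel_measurable M"
    using f unfolding square_integrable_def by (auto intro: borel_measurable_scaleR)
qed auto

lemma square_integrable_diff:
  assumes M: "finite_measure M" and f: "square_integrable M f" and g: "square_integrable M g"
  shows "square_integrable M (\<lambda>\<omega>. f \<omega> - g \<omega>)"
  using square_integrable_add[OF M f square_integrable_scaleR[OF M g, of "-1"]] by simp

lemma square_integrable_sum: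
  assumes M: "finite_measure M" and f: "\<And>k. k \<in> I \<Longrightarrow> square_integrable M (f k)"
  shows "square_integrable M (\<lambda>\<omega>. \<Sum>k\<in>I. f k \<omega>)"
  using f
proof (induction I rule: infinite_finite_induct)
  case (insert x F)
  then show ?case by (simp add: square_integrable_add[OF M])
qed (simp_all add: square_integrable_const[OF M])

lemma square_integrable_inner:
  assumes f: "square_integrable M f" and g: "square_integrable M g"
  shows "integrable M (\<lambda>\<omega>. f \<omega> \<bullet> g \<omega>)"
proof -
  have fm: "f \<in> borel_measurable M" and gm: "g \<in> borel_measurable M"
    and maj: "integrable M (\<lambda>\<omega>. norm (f \<omega>)^2 + norm (g \<omega>)^2)"
    using f g unfolding square_integrable_def by (auto intro: Bochner_Integration.integrable_add)
  show ?thesis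
  proof (rule Bochner_Integration.integrable_bound[OF maj])
    show "(\<lambda>\<omega>. f \<omega> \<bullet> g \<omega>) \<in> borel_measurable M" using fm gm by measurable
    show "AE \<omega> in M. norm (f \<omega> \<bullet> g \<omega>) \<le> norm (norm (f \<omega>)^2 + norm (g \<omega>)^2)"
    proof (rule AE_I2)
      fix \<omega>
      have "\<bar>f \<omega> \<bullet> g \<omega>\<bar> \<le> norm (f \<omega>) * norm (g \<omega>)" by (rule Cauchy_Schwarz_ineq2)
      moreover have "2 * (norm (f \<omega>) * norm (g \<omega>)) \<le> norm (f \<omega>)^2 + norm (g \<omega>)^2"
        using zero_le_power2[of "norm (f \<omega>) - norm (g \<omega>)"] by (simp add: power2_eq_square algebra_simps)
      moreover have "0 \<le> norm (f \<omega>) * norm (g \<omega>)" by simp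
      ultimately show "norm (f \<omega> \<bullet> g \<omega>) \<le> norm (norm (f \<omega>)^2 + norm (g \<omega>)^2)" by simp
    qed
  qed
qed

lemma (in prob_space) indep_var_nn_integral_iterated:
  assumes ind: "indep_var N U S V" and F: "F \<in> borel_measurable (N \<Otimes>\<^sub>M S)"
  shows "(\<integral>\<^sup>+\<omega>. F (U \<omega>, V \<omega>) \<partial>M) = (\<integral>\<^sup>+u. \<integral>\<^sup>+v. F (u, v) \<partial>distr M S V \<partial>distr M N U)"
proof -
  have U: "U \<in> M \<rightarrow>\<^sub>M N" and V: "V \<in> M \<rightarrow>\<^sub>M S"
    and eq: "distr M N U \<Otimes>\<^sub>M distr M S V = distr M (N \<Otimes>\<^sub>M S) (\<lambda>x. (U x, V x))"
    using ind unfolding indep_var_distribution_eq by auto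
  interpret V: prob_space "distr M S V" by (rule prob_space_distr[OF V])
  have "sets (distr M N U \<Otimes>\<^sub>M distr M S V) = sets (N \<Otimes>\<^sub>M S)"
    by (intro sets_pair_measure_cong) auto
  then have "borel_measurable (distr M N U \<Otimes>\<^sub>M distr M S V) = borel_measurable (N \<Otimes>\<^sub>M S)"
    by (rule measurable_cong_sets) simp
  then have F': "F \<in> borel_measurable (distr M N U \<Otimes>\<^sub>M distr M S V)" using F by simp
  have UV: "(\<lambda>x. (U x, V x)) \<in> M \<rightarrow>\<^sub>M N \<Otimes>\<^sub>M S" using U V by (rule measurable_Pair)
  have "(\<integral>\<^sup>+\<omega>. F (U \<omega>, V \<omega>) \<partial>M) = (\<integral>\<^sup>+p. F p \<partial>distr M (N \<Otimes>\<^sub>M S) (\<lambda>x. (U x, V x)))"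
    by (subst nn_integral_distr[OF UV]) (use F in auto)
  also have "\<dots> = (\<integral>\<^sup>+u. \<integral>\<^sup>+v. F (u, v) \<partial>distr M S V \<partial>distr M N U)"
    unfolding eq[symmetric] by (rule V.nn_integral_fst[OF F', symmetric])
  finally show ?thesis .
qed

lemma (in prob_space) indep_var_integral_iterated:
  fixes F :: "_ \<Rightarrow> real"
  assumes ind: "indep_var N U S V" and F: "F \<in> borel_measurable (N \<Otimes>\<^sub>M S)"
    and int: "integrable M (\<lambda>\<omega>. F (U \<omega>, V \<omega>))"
  shows "(\<integral>\<omega>. F (U \<omega>, V \<omega>) \<partial>M) = (\<integral>u. \<integral>v. F (u, v) \<partial>distr M S V \<partial>distr M N U)"
proof -
  have U: "U \<in> M \<rightarrow>\<^sub>M N" and V: "V \<in> M \<rightarrow>\<^sub>M S"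
    and eq: "distr M N U \<Otimes>\<^sub>M distr M S V = distr M (N \<Otimes>\<^sub>M S) (\<lambda>x. (U x, V x))"
    using ind unfolding indep_var_distribution_eq by auto
  interpret UV: pair_prob_space "distr M N U" "distr M S V"
    by (intro pair_prob_space.intro pair_sigma_finite.intro prob_space_imp_sigma_finite prob_space_distr U V)
  have UVm: "(\<lambda>x. (U x, V x)) \<in> M \<rightarrow>\<^sub>M N \<Otimes>\<^sub>M S" using U V by (rule measurable_Pair)
  have "(\<integral>\<omega>. F (U \<omega>, V \<omega>) \<partial>M) = (\<integral>p. F p \<partial>distr M (N \<Otimes>\<^sub>M S) (\<lambda>x. (U x, V x)))"
    by (rule integral_distr[OF UVm F, symmetric])
  also have "\<dots> = (\<integral>u. \<integral>v. F (u, v) \<partial>distr M S V \<partial>distr M N U)"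
    unfolding eq[symmetric]
  proof (rule UV.integral_fst'[symmetric])
    show "integrable (distr M N U \<Otimes>\<^sub>M distr M S V) F"
      unfolding eq using int by (subst integrable_distr_eq[OF UVm F]) auto
  qed
  finally show ?thesis .
qed

lemma (in prob_space) indep_var_second_moment_le:
  assumes ind: "indep_var N U S V"
    and h: "(\<lambda>(u, v). h u v) \<in> borel_measurable (N \<Otimes>\<^sub>M S)"
    and var: "\<And>u. u \<in> space N \<Longrightarrow> (\<integral>\<^sup>+v. ennreal (norm (h u v)^2) \<partial>distr M S V) \<le> ennreal \<sigma>2"
  shows "(\<integral>\<^sup>+\<omega>. ennreal (norm (h (U \<omega>) (V \<omega>))^2) \<partial>M) \<le> ennreal \<sigma>2"
proof -
  have U: "U \<in> M \<rightarrow>\<^sub>M N" using ind unfolding indep_var_distribution_eq by auto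
  have "(\<lambda>p. h (fst p) (snd p)) \<in> borel_measurable (N \<Otimes>\<^sub>M S)" using h by (simp add: case_prod_beta)
  then have "(\<lambda>p. ennreal (norm (h (fst p) (snd p))^2)) \<in> borel_measurable (N \<Otimes>\<^sub>M S)" by measurable
  from indep_var_nn_integral_iterated[OF ind this]
  have "(\<integral>\<^sup>+\<omega>. ennreal (norm (h (U \<omega>) (V \<omega>))^2) \<partial>M)
      = (\<integral>\<^sup>+u. \<integral>\<^sup>+v. ennreal (norm (h u v)^2) \<partial>distr M S V \<partial>distr M N U)" by simp
  also have "\<dots> \<le> (\<integral>\<^sup>+u. ennreal \<sigma>2 \<partial>distr M N U)" by (intro nn_integral_mono) (use var in simp)
  also have "\<dots> = ennreal \<sigma>2" using prob_space.emeasure_space_1[OF prob_space_distr[OF U]] by simp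
  finally show ?thesis .
qed

lemma (in prob_space) indep_var_inner_zero_mean:
  assumes ind: "indep_var N U S V"
    and h: "(\<lambda>(u, v). h u v) \<in> borel_measurable (N \<Otimes>\<^sub>M S)"
    and mean: "\<And>u. u \<in> space N \<Longrightarrow> has_bochner_integral (distr M S V) (h u) 0"
    and C: "C \<in> borel_measurable N"
    and C_sq: "square_integrable M (\<lambda>\<omega>. C (U \<omega>))" and h_sq: "square_integrable M (\<lambda>\<omega>. h (U \<omega>) (V \<omega>))"
  shows "integrable M (\<lambda>\<omega>. C (U \<omega>) \<bullet> h (U \<omega>) (V \<omega>))" and "(\<integral>\<omega>. C (U \<omega>) \<bullet> h (U \<omega>) (V \<omega>) \<partial>M) = 0"
proof -
  show int: "integrable M (\<lambda>\<omega>. C (U \<omega>) \<bullet> h (U \<omega>) (V \<omega>))" by (rule square_integrable_inner[OF C_sq h_sq])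
  have "(\<lambda>p. h (fst p) (snd p)) \<in> borel_measurable (N \<Otimes>\<^sub>M S)" using h by (simp add: case_prod_beta)
  then have "(\<lambda>p. C (fst p) \<bullet> h (fst p) (snd p)) \<in> borel_measurable (N \<Otimes>\<^sub>M S)" using C by measurable
  from indep_var_integral_iterated[OF ind this] int
  have "(\<integral>\<omega>. C (U \<omega>) \<bullet> h (U \<omega>) (V \<omega>) \<partial>M) = (\<integral>u. \<integral>v. C u \<bullet> h u v \<partial>distr M S V \<partial>distr M N U)" by simp
  also have "\<dots> = (\<integral>u. 0 \<partial>distr M N U)"
  proof (rule Bochner_Integration.integral_cong[OF refl])
    fix u assume "u \<in> space (distr M N U)"
    then have "has_bochner_integral (distr M S V) (\<lambda>v. C u \<bullet> h u v) (C u \<bullet> 0)"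
      using mean by (intro has_bochner_integral_inner_right) auto
    then show "(\<integral>v. C u \<bullet> h u v \<partial>distr M S V) = 0" by (simp add: has_bochner_integral_integral_eq)
  qed
  finally show "(\<integral>\<omega>. C (U \<omega>) \<bullet> h (U \<omega>) (V \<omega>) \<partial>M) = 0" by simp
qed

section \<open>The stochastic algorithm\<close>

locale dprox_algorithm = prox_setting r f gf \<phi> L \<eta> lam
  for r :: "'a::euclidean_space \<Rightarrow> ereal" and f :: "'n::finite \<Rightarrow> 'a \<Rightarrow> real" and gf \<phi> L \<eta> lam +
  fixes W :: "real^'n^'n" and G :: "'n \<Rightarrow> 'a \<Rightarrow> 'b \<Rightarrow> 'a" and x0 :: "'n \<Rightarrow> 'a"
  assumes W_nonneg: "\<And>i j. W $ i $ j \<ge> 0"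
    and W_rows: "\<And>i. (\<Sum>j\<in>UNIV. W $ i $ j) = 1"
    and W_cols: "\<And>j. (\<Sum>i\<in>UNIV. W $ i $ j) = 1"
    and x0_dom: "\<And>i. x0 i \<in> edom r"
begin

text \<open>For a sample path \<open>\<xi>\<close>: \<open>iter_x \<xi> t = X\<^sup>t\<close>, but \<open>iter_y \<xi> t = Y\<^sup>t\<^sup>-\<^sup>1\<close> and \<open>iter_g \<xi> t\<close> are the
  stochastic gradients of iteration \<open>t - 1\<close> (both zero for \<open>t = 0\<close>).\<close>
definition "iter_x \<xi> t \<omega> = fst (dprox_state W G r \<eta> x0 \<xi> t \<omega>)"
definition "iter_y \<xi> t \<omega> = fst (snd (dprox_state W G r \<eta> x0 \<xi> t \<omega>))"
definition "iter_g \<xi> t \<omega> = snd (snd (dprox_state W G r \<eta> x0 \<xi> t \<omega>))"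

lemma dprox_state_eq: "dprox_state W G r \<eta> x0 \<xi> t \<omega> = (iter_x \<xi> t \<omega>, iter_y \<xi> t \<omega>, iter_g \<xi> t \<omega>)"
  unfolding iter_x_def iter_y_def iter_g_def by simp

lemma iter_0: "iter_x \<xi> 0 \<omega> = x0" "iter_y \<xi> 0 \<omega> = (\<lambda>_. 0)" "iter_g \<xi> 0 \<omega> = (\<lambda>_. 0)"
  unfolding iter_x_def iter_y_def iter_g_def by simp_all

lemma iter_g_Suc: "iter_g \<xi> (Suc t) \<omega> = (\<lambda>i. G i (iter_x \<xi> t \<omega> i) (\<xi> t i \<omega>))"
  unfolding iter_g_def by (simp add: dprox_state_eq[of \<xi> t \<omega>])

lemma iter_y_Suc:
  "iter_y \<xi> (Suc t) \<omega>
     = (\<lambda>i. \<Sum>j\<in>UNIV. W $ j $ i *\<^sub>R (iter_y \<xi> t \<omega> j + G j (iter_x \<xi> t \<omega> j) (\<xi> t j \<omega>) - iter_g \<xi> t \<omega> j))"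
  by (subst iter_y_def) (simp add: dprox_state_eq[of \<xi> t \<omega>])

lemma iter_x_Suc:
  "iter_x \<xi> (Suc t) \<omega> = (\<lambda>i. \<Sum>j\<in>UNIV. W $ j $ i *\<^sub>R prox_r (iter_x \<xi> t \<omega> j - \<eta> *\<^sub>R iter_y \<xi> (Suc t) \<omega> j))"
  by (subst iter_x_def) (simp add: dprox_state_eq[of \<xi> t \<omega>] iter_y_Suc prox_r_def)

lemma iter_x_in_edom: "iter_x \<xi> t \<omega> i \<in> edom r"
proof (induction t arbitrary: i)
  case 0
  then show ?case using x0_dom by (simp add: iter_0)
next
  case (Suc t)
  show ?case unfolding iter_x_Suc
    by (rule convex_sum[OF _ convex_edom W_cols W_nonneg prox_r_in_edom]) auto
qed

text \<open>Gradient tracking: the rows of \<open>W\<close> sum to 1, so mixing preserves the sum of the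
  \<open>y\<close>-variables and the telescoping gradient corrections leave the last stochastic gradients.\<close>
lemma sum_iter_y: "(\<Sum>i\<in>UNIV. iter_y \<xi> t \<omega> i) = (\<Sum>i\<in>UNIV. iter_g \<xi> t \<omega> i)"
proof (induction t)
  case 0
  then show ?case by (simp add: iter_0)
next
  case (Suc t)
  have "(\<Sum>i\<in>UNIV. iter_y \<xi> (Suc t) \<omega> i)
      = (\<Sum>j\<in>UNIV. (\<Sum>i\<in>UNIV. W $ j $ i) *\<^sub>R (iter_y \<xi> t \<omega> j + G j (iter_x \<xi> t \<omega> j) (\<xi> t j \<omega>) - iter_g \<xi> t \<omega> j))"
    unfolding iter_y_Suc by (subst sum.swap) (simp add: scaleR_sum_left)
  also have "\<dots> = (\<Sum>j\<in>UNIV. iter_y \<xi> t \<omega> j) + (\<Sum>j\<in>UNIV. G j (iter_x \<xi> t \<omega> j) (\<xi> t j \<omega>)) - (\<Sum>j\<in>UNIV. iter_g \<xi> t \<omega> j)"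
    using W_rows by (simp add: sum.distrib sum_subtractf)
  also have "\<dots> = (\<Sum>i\<in>UNIV. iter_g \<xi> (Suc t) \<omega> i)" using Suc by (simp add: iter_g_Suc)
  finally show ?case .
qed

lemma dprox_state_cong:
  "(\<And>s j. s < t \<Longrightarrow> \<xi> s j \<omega> = \<xi>' s j \<omega>') \<Longrightarrow>
    dprox_state W G r \<eta> x0 \<xi> t \<omega> = dprox_state W G r \<eta> x0 \<xi>' t \<omega>'"
proof (induction t)
  case (Suc t)
  then have "dprox_state W G r \<eta> x0 \<xi> t \<omega> = dprox_state W G r \<eta> x0 \<xi>' t \<omega>'" by auto
  moreover have "\<xi> t j \<omega> = \<xi>' t j \<omega>'" for j using Suc.prems by auto
  ultimately show ?case by simp
qed simp

lemma iter_env_step_le: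
  "(\<Sum>i\<in>UNIV. env (iter_x \<xi> (Suc t) \<omega> i))
     \<le> (\<Sum>i\<in>UNIV. env (iter_x \<xi> t \<omega> i)) + (4 / lam) * perp_sq (iter_x \<xi> t \<omega>)
       + (4 * \<eta>^2 / lam) * perp_sq (iter_y \<xi> (Suc t) \<omega>)
       - (\<eta> / (4 * lam^2)) * (\<Sum>i\<in>UNIV. norm (prox_phi (iter_x \<xi> t \<omega> i) - iter_x \<xi> t \<omega> i)^2)
       + noise_coeff (iter_x \<xi> t \<omega>) \<bullet> ((1 / real CARD('n)) *\<^sub>R
           (\<Sum>i\<in>UNIV. G i (iter_x \<xi> t \<omega> i) (\<xi> t i \<omega>) - gf i (iter_x \<xi> t \<omega> i)))
       + (real CARD('n) * \<eta>^2 / lam) * norm ((1 / real CARD('n)) *\<^sub>R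
           (\<Sum>i\<in>UNIV. G i (iter_x \<xi> t \<omega> i) (\<xi> t i \<omega>) - gf i (iter_x \<xi> t \<omega> i)))^2"
proof -
  have "(\<Sum>i\<in>UNIV. iter_y \<xi> (Suc t) \<omega> i) = (\<Sum>i\<in>UNIV. G i (iter_x \<xi> t \<omega> i) (\<xi> t i \<omega>))"
    using sum_iter_y[of \<xi> "Suc t" \<omega>] by (simp add: iter_g_Suc)
  then show ?thesis unfolding iter_x_Suc[of \<xi> t \<omega>]
    by (rule env_step_le[OF W_nonneg W_rows W_cols iter_x_in_edom])
qed

lemma iter_measurable:
  assumes \<xi>: "\<And>s j. s < t \<Longrightarrow> \<xi> s j \<in> N \<rightarrow>\<^sub>M S"
    and G_meas: "\<And>i. (\<lambda>(x, s). G i x s) \<in> borel_measurable (borel \<Otimes>\<^sub>M S)"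
  shows "(\<lambda>\<omega>. iter_x \<xi> t \<omega> i) \<in> borel_measurable N \<and> (\<lambda>\<omega>. iter_y \<xi> t \<omega> i) \<in> borel_measurable N
       \<and> (\<lambda>\<omega>. iter_g \<xi> t \<omega> i) \<in> borel_measurable N"
  using \<xi>
proof (induction t arbitrary: i)
  case 0
  then show ?case by (simp add: iter_0)
next
  case (Suc t)
  have IH: "(\<lambda>\<omega>. iter_x \<xi> t \<omega> j) \<in> borel_measurable N" "(\<lambda>\<omega>. iter_y \<xi> t \<omega> j) \<in> borel_measurable N"
     "(\<lambda>\<omega>. iter_g \<xi> t \<omega> j) \<in> borel_measurable N" for j using Suc by auto
  have g: "(\<lambda>\<omega>. G j (iter_x \<xi> t \<omega> j) (\<xi> t j \<omega>)) \<in> borel_measurable N" for j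
  proof -
    have "(\<lambda>\<omega>. (iter_x \<xi> t \<omega> j, \<xi> t j \<omega>)) \<in> N \<rightarrow>\<^sub>M borel \<Otimes>\<^sub>M S"
      using IH(1)[of j] Suc.prems[of t j] by (intro measurable_Pair) auto
    from measurable_compose[OF this G_meas[of j]] show ?thesis by simp
  qed
  have y: "(\<lambda>\<omega>. iter_y \<xi> (Suc t) \<omega> j) \<in> borel_measurable N" for j
    unfolding iter_y_Suc using IH g by measurable
  have "(\<lambda>\<omega>. prox_r (iter_x \<xi> t \<omega> j - \<eta> *\<^sub>R iter_y \<xi> (Suc t) \<omega> j)) \<in> borel_measurable N" for j
    using measurable_compose[OF _ borel_measurable_continuous_onI[OF prox_r_continuous]] IH(1) y by measurable
  then have "(\<lambda>\<omega>. iter_x \<xi> (Suc t) \<omega> i) \<in> borel_measurable N"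
    unfolding iter_x_Suc by measurable
  then show ?case using y g by (simp add: iter_g_Suc)
qed

end

locale dprox_stochastic = dprox_algorithm r f gf \<phi> L \<eta> lam W G x0
  for r :: "'a::euclidean_space \<Rightarrow> ereal" and f :: "'n::finite \<Rightarrow> 'a \<Rightarrow> real"
    and gf \<phi> L \<eta> lam W and G :: "'n \<Rightarrow> 'a \<Rightarrow> 'b \<Rightarrow> 'a" and x0 +
  fixes M :: "'w measure" and S :: "'b measure" and Dd :: "'n \<Rightarrow> 'b measure"
    and xi :: "nat \<Rightarrow> 'n \<Rightarrow> 'w \<Rightarrow> 'b" and \<sigma> :: real
  assumes M_prob: "prob_space M"
    and xi_distr: "\<And>t i. distr M S (xi t i) = Dd i"
    and xi_indep: "prob_space.indep_vars M (\<lambda>_. S) (\<lambda>(t, i). xi t i) UNIV"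
    and G_meas: "\<And>i. (\<lambda>(x, s). G i x s) \<in> borel_measurable (borel \<Otimes>\<^sub>M S)"
    and G_unbiased: "\<And>i x. x \<in> edom r \<Longrightarrow> has_bochner_integral (Dd i) (G i x) (gf i x)"
    and G_var: "\<And>i x. x \<in> edom r \<Longrightarrow> (\<integral>\<^sup>+ s. ennreal (norm (G i x s - gf i x)^2) \<partial>(Dd i)) \<le> ennreal (\<sigma>^2)"
begin

interpretation M: prob_space M by (rule M_prob)

lemma xi_measurable: "xi t i \<in> M \<rightarrow>\<^sub>M S"
  using xi_indep unfolding M.indep_vars_def by auto

lemma Dd_prob: "prob_space (Dd i)"
  using M.prob_space_distr[OF xi_measurable[of 0 i]] xi_distr[of 0 i] by simp

lemma sets_Dd: "sets (Dd i) = sets S"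
  using xi_distr[of 0 i] by (metis sets_distr)

text \<open>No measurability of the gradients \<open>gf i\<close> is assumed; it follows from unbiasedness,
  which writes \<open>gf i\<close> as a parametric integral of the measurable \<open>G i\<close>.\<close>
lemma gf_measurable:
  assumes Y: "Y \<in> borel_measurable N" and YD: "\<And>\<omega>. \<omega> \<in> space N \<Longrightarrow> Y \<omega> \<in> edom r"
  shows "(\<lambda>\<omega>. gf i (Y \<omega>)) \<in> borel_measurable N"
proof -
  have E: "N \<Otimes>\<^sub>M Dd i \<rightarrow>\<^sub>M borel \<Otimes>\<^sub>M S = N \<Otimes>\<^sub>M S \<rightarrow>\<^sub>M borel \<Otimes>\<^sub>M S"
    by (rule measurable_cong_sets) (auto intro: sets_pair_measure_cong simp: sets_Dd)
  have "(\<lambda>p. (Y (fst p), snd p)) \<in> N \<Otimes>\<^sub>M S \<rightarrow>\<^sub>M borel \<Otimes>\<^sub>M S" using Y by measurable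
  then have "(\<lambda>p. (Y (fst p), snd p)) \<in> N \<Otimes>\<^sub>M Dd i \<rightarrow>\<^sub>M borel \<Otimes>\<^sub>M S" by (subst E)
  from measurable_compose[OF this G_meas[of i]]
  have "(\<lambda>(\<omega>, s). G i (Y \<omega>) s) \<in> borel_measurable (N \<Otimes>\<^sub>M Dd i)" by (simp add: case_prod_beta)
  from sigma_finite_measure.borel_measurable_lebesgue_integral[OF prob_space_imp_sigma_finite[OF Dd_prob] this]
  have "(\<lambda>\<omega>. \<integral>s. G i (Y \<omega>) s \<partial>Dd i) \<in> borel_measurable N" .
  moreover have "(\<integral>s. G i (Y \<omega>) s \<partial>Dd i) = gf i (Y \<omega>)" if "\<omega> \<in> space N" for \<omega>
    using G_unbiased[OF YD[OF that]] by (simp add: has_bochner_integral_integral_eq)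
  ultimately show ?thesis by (simp cong: measurable_cong)
qed

text \<open>Sample vectors: the restriction of the whole sample path to an index set \<open>K\<close>;
  \<open>iter_x sample_coord t\<close> runs the algorithm on such a vector.\<close>
definition "past (t::nat) = {(s, j::'n). s < t}"
definition "samples K \<omega> = (\<lambda>p\<in>K. xi (fst p) (snd p) \<omega>)"
definition "sample_coord s j u = u (s, j)"
abbreviation "Samples K \<equiv> Pi\<^sub>M K (\<lambda>_. S)"

lemma samples_measurable: "samples K \<in> M \<rightarrow>\<^sub>M Samples K"
  unfolding samples_def by (rule measurable_restrict) (simp add: xi_measurable)

lemma sample_coord_measurable: "(s, j) \<in> K \<Longrightarrow> sample_coord s j \<in> Samples K \<rightarrow>\<^sub>M S"
  unfolding sample_coord_def by (rule measurable_component_singleton)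

lemma samples_apply: "p \<in> K \<Longrightarrow> samples K \<omega> p = xi (fst p) (snd p) \<omega>"
  unfolding samples_def by simp

lemma iter_samples:
  assumes "past t \<subseteq> K"
  shows "iter_x sample_coord t (samples K \<omega>) = iter_x xi t \<omega>"
    and "iter_y sample_coord t (samples K \<omega>) = iter_y xi t \<omega>"
    and "iter_g sample_coord t (samples K \<omega>) = iter_g xi t \<omega>"
proof -
  have "dprox_state W G r \<eta> x0 sample_coord t (samples K \<omega>) = dprox_state W G r \<eta> x0 xi t \<omega>"
  proof (rule dprox_state_cong)
    fix s j assume "s < t"
    then have "(s, j) \<in> K" using assms unfolding past_def by auto
    then show "sample_coord s j (samples K \<omega>) = xi s j \<omega>" by (simp add: sample_coord_def samples_apply)
  qed
  then show "iter_x sample_coord t (samples K \<omega>) = iter_x xi t \<omega>"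
    and "iter_y sample_coord t (samples K \<omega>) = iter_y xi t \<omega>"
    and "iter_g sample_coord t (samples K \<omega>) = iter_g xi t \<omega>"
    unfolding iter_x_def iter_y_def iter_g_def by simp_all
qed

lemma iter_x_measurable_samples:
  assumes "past t \<subseteq> K"
  shows "(\<lambda>u. iter_x sample_coord t u i) \<in> borel_measurable (Samples K)"
proof -
  have "sample_coord s j \<in> Samples K \<rightarrow>\<^sub>M S" if "s < t" for s j
    using assms that by (intro sample_coord_measurable) (auto simp: past_def)
  from iter_measurable[where \<xi> = sample_coord and N = "Samples K", OF this G_meas] show ?thesis by blast
qed

lemma iter_measurable_M:
  "(\<lambda>\<omega>. iter_x xi t \<omega> i) \<in> borel_measurable M" "(\<lambda>\<omega>. iter_y xi t \<omega> i) \<in> borel_measurable M"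
  using iter_measurable[OF xi_measurable G_meas] by auto

lemma indep_samples:
  "(t, k) \<notin> K \<Longrightarrow> M.indep_var (Samples K) (samples K) (Samples {(t, k)}) (samples {(t, k)})"
  using M.indep_var_restrict[OF xi_indep, of K "{(t, k)}"] unfolding samples_def by (auto simp: case_prod_beta)

lemma single_sample_integral:
  fixes H :: "'b \<Rightarrow> 'a"
  assumes H: "H \<in> borel_measurable S" and HI: "has_bochner_integral (Dd k) H x"
  shows "has_bochner_integral (distr M (Samples {(t, k)}) (samples {(t, k)})) (\<lambda>v. H (v (t, k))) x"
proof -
  have m: "(\<lambda>v. H (v (t, k))) \<in> borel_measurable (Samples {(t, k)})"
    using measurable_compose[OF measurable_component_singleton[of "(t, k)" "{(t, k)}" "\<lambda>_. S"] H] by simp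
  have "integrable (distr M S (xi t k)) H" "integral\<^sup>L (distr M S (xi t k)) H = x"
    using HI xi_distr[of t k] by (auto simp: has_bochner_integral_iff)
  then have "integrable M (\<lambda>\<omega>. H (xi t k \<omega>))" "(\<integral>\<omega>. H (xi t k \<omega>) \<partial>M) = x"
    using integrable_distr_eq[OF xi_measurable H] integral_distr[OF xi_measurable H] by auto
  then have "has_bochner_integral M (\<lambda>\<omega>. H (samples {(t, k)} \<omega> (t, k))) x"
    by (simp add: samples_apply has_bochner_integral_iff)
  then show ?thesis by (rule has_bochner_integral_distr[OF m samples_measurable])
qed

lemma single_sample_nn_integral:
  fixes H :: "'b \<Rightarrow> ennreal"
  assumes H: "H \<in> borel_measurable S"
  shows "(\<integral>\<^sup>+v. H (v (t, k)) \<partial>distr M (Samples {(t, k)}) (samples {(t, k)})) = (\<integral>\<^sup>+s. H s \<partial>Dd k)"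
proof -
  have m: "(\<lambda>v. H (v (t, k))) \<in> borel_measurable (Samples {(t, k)})"
    using measurable_compose[OF measurable_component_singleton[of "(t, k)" "{(t, k)}" "\<lambda>_. S"] H] by simp
  have "(\<integral>\<^sup>+v. H (v (t, k)) \<partial>distr M (Samples {(t, k)}) (samples {(t, k)})) = (\<integral>\<^sup>+\<omega>. H (xi t k \<omega>) \<partial>M)"
    by (subst nn_integral_distr[OF samples_measurable]) (use m in \<open>simp_all add: samples_apply\<close>)
  also have "\<dots> = (\<integral>\<^sup>+s. H s \<partial>distr M S (xi t k))" by (subst nn_integral_distr[OF xi_measurable]) (use H in simp_all)
  finally show ?thesis using xi_distr by simp
qed

definition "noise t k \<omega> = G k (iter_x xi t \<omega> k) (xi t k \<omega>) - gf k (iter_x xi t \<omega> k)"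
definition "noise_kernel t k u v = G k (iter_x sample_coord t u k) (v (t, k)) - gf k (iter_x sample_coord t u k)"

lemma noise_eq_kernel: "past t \<subseteq> K \<Longrightarrow> noise t k = (\<lambda>\<omega>. noise_kernel t k (samples K \<omega>) (samples {(t, k)} \<omega>))"
  unfolding noise_def noise_kernel_def by (auto simp: iter_samples samples_apply)

lemma G_measurable_at: "G k x \<in> borel_measurable S"
proof -
  have "(\<lambda>s. (x, s)) \<in> S \<rightarrow>\<^sub>M borel \<Otimes>\<^sub>M S" by measurable
  from measurable_compose[OF this G_meas[of k]] show ?thesis by simp
qed

lemma noise_kernel_measurable:
  assumes "past t \<subseteq> K"
  shows "(\<lambda>(u, v). noise_kernel t k u v) \<in> borel_measurable (Samples K \<Otimes>\<^sub>M Samples {(t, k)})"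
proof -
  let ?x = "\<lambda>u. iter_x sample_coord t u k"
  have x: "(\<lambda>p. ?x (fst p)) \<in> borel_measurable (Samples K \<Otimes>\<^sub>M Samples {(t, k)})"
    using iter_x_measurable_samples[OF assms] by measurable
  have "(\<lambda>p. snd p (t, k)) \<in> Samples K \<Otimes>\<^sub>M Samples {(t, k)} \<rightarrow>\<^sub>M S"
    using measurable_compose[OF measurable_snd measurable_component_singleton[of "(t, k)" "{(t, k)}" "\<lambda>_. S"]] by simp
  with x have "(\<lambda>p. (?x (fst p), snd p (t, k))) \<in> Samples K \<Otimes>\<^sub>M Samples {(t, k)} \<rightarrow>\<^sub>M borel \<Otimes>\<^sub>M S"
    by (rule measurable_Pair)
  from measurable_compose[OF this G_meas[of k]]
  have "(\<lambda>p. G k (?x (fst p)) (snd p (t, k))) \<in> borel_measurable (Samples K \<Otimes>\<^sub>M Samples {(t, k)})" by simp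
  moreover have "(\<lambda>p. gf k (?x (fst p))) \<in> borel_measurable (Samples K \<Otimes>\<^sub>M Samples {(t, k)})"
    by (rule gf_measurable[OF x iter_x_in_edom])
  ultimately show ?thesis unfolding noise_kernel_def case_prod_beta by (rule borel_measurable_diff)
qed

lemma noise_kernel_mean:
  "has_bochner_integral (distr M (Samples {(t, k)}) (samples {(t, k)})) (noise_kernel t k u) 0"
proof -
  let ?x = "iter_x sample_coord t u k"
  interpret Dk: prob_space "Dd k" by (rule Dd_prob)
  have "has_bochner_integral (Dd k) (\<lambda>_. gf k ?x) (gf k ?x)"
    by (simp add: has_bochner_integral_iff Dk.prob_space)
  with G_unbiased[OF iter_x_in_edom]
  have "has_bochner_integral (Dd k) (\<lambda>s. G k ?x s - gf k ?x) (gf k ?x - gf k ?x)"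
    by (rule has_bochner_integral_diff)
  from single_sample_integral[OF _ this, of t]
  show ?thesis unfolding noise_kernel_def using G_measurable_at by simp
qed

lemma noise_kernel_second_moment:
  "(\<integral>\<^sup>+v. ennreal (norm (noise_kernel t k u v)^2) \<partial>distr M (Samples {(t, k)}) (samples {(t, k)})) \<le> ennreal (\<sigma>^2)"
proof -
  let ?x = "iter_x sample_coord t u k"
  have "(\<lambda>s. ennreal (norm (G k ?x s - gf k ?x)^2)) \<in> borel_measurable S"
    using G_measurable_at by measurable
  from single_sample_nn_integral[OF this, of t] G_var[OF iter_x_in_edom[of sample_coord t u k]]
  show ?thesis unfolding noise_kernel_def by simp
qed

lemma past_not_in: "(t, k) \<notin> past t"
  unfolding past_def by auto

lemma noise_second_moment_le: "(\<integral>\<^sup>+\<omega>. ennreal (norm (noise t k \<omega>)^2) \<partial>M) \<le> ennreal (\<sigma>^2)"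
  unfolding noise_eq_kernel[OF order_refl]
  by (rule M.indep_var_second_moment_le[OF indep_samples[OF past_not_in]
        noise_kernel_measurable[OF order_refl] noise_kernel_second_moment])

lemma noise_measurable: "noise t k \<in> borel_measurable M"
proof -
  have "(\<lambda>\<omega>. (iter_x xi t \<omega> k, xi t k \<omega>)) \<in> M \<rightarrow>\<^sub>M borel \<Otimes>\<^sub>M S"
    using iter_measurable_M(1) xi_measurable by (rule measurable_Pair)
  from measurable_compose[OF this G_meas[of k]]
  have "(\<lambda>\<omega>. G k (iter_x xi t \<omega> k) (xi t k \<omega>)) \<in> borel_measurable M" by simp
  moreover have "(\<lambda>\<omega>. gf k (iter_x xi t \<omega> k)) \<in> borel_measurable M"
    by (rule gf_measurable[OF iter_measurable_M(1) iter_x_in_edom])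
  ultimately show ?thesis unfolding noise_def by (rule borel_measurable_diff)
qed

lemma noise_square_integrable: "square_integrable M (noise t k)"
proof -
  have "integrable M (\<lambda>\<omega>. norm (noise t k \<omega>)^2)"
  proof (rule integrableI_nonneg)
    show "(\<lambda>\<omega>. norm (noise t k \<omega>)^2) \<in> borel_measurable M" using noise_measurable by measurable
    show "(\<integral>\<^sup>+\<omega>. ennreal (norm (noise t k \<omega>)^2) \<partial>M) < \<infinity>"
      using noise_second_moment_le by (rule le_less_trans) simp
  qed simp
  then show ?thesis unfolding square_integrable_def using noise_measurable by simp
qed

lemma noise_integral_sq_le: "(\<integral>\<omega>. norm (noise t k \<omega>)^2 \<partial>M) \<le> \<sigma>^2"
proof -
  have "ennreal (\<integral>\<omega>. norm (noise t k \<omega>)^2 \<partial>M) = (\<integral>\<^sup>+\<omega>. ennreal (norm (noise t k \<omega>)^2) \<partial>M)"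
    using noise_square_integrable unfolding square_integrable_def
    by (intro nn_integral_eq_integral[symmetric]) auto
  also have "\<dots> \<le> ennreal (\<sigma>^2)" by (rule noise_second_moment_le)
  finally show ?thesis by (auto simp: ennreal_le_iff2)
qed

text \<open>The samples in \<open>K\<close> determine the iterate and are independent of the current sample of
  node \<open>k\<close>, so given them the noise has mean zero.\<close>
lemma noise_orthogonal:
  assumes K: "past t \<subseteq> K" "(t, k) \<notin> K"
    and C: "C \<in> borel_measurable (Samples K)" and C_sq: "square_integrable M (\<lambda>\<omega>. C (samples K \<omega>))"
  shows "integrable M (\<lambda>\<omega>. C (samples K \<omega>) \<bullet> noise t k \<omega>)"
    and "(\<integral>\<omega>. C (samples K \<omega>) \<bullet> noise t k \<omega> \<partial>M) = 0"
proof -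
  have mean: "\<And>u. u \<in> space (Samples K) \<Longrightarrow>
      has_bochner_integral (distr M (Samples {(t, k)}) (samples {(t, k)})) (noise_kernel t k u) 0"
    by (rule noise_kernel_mean)
  have h_sq: "square_integrable M (\<lambda>\<omega>. noise_kernel t k (samples K \<omega>) (samples {(t, k)} \<omega>))"
    using noise_square_integrable[of t k] unfolding noise_eq_kernel[OF K(1)] .
  note zero_mean = M.indep_var_inner_zero_mean[where N = "Samples K" and U = "samples K" and C = C
      and S = "Samples {(t, k)}" and V = "samples {(t, k)}" and h = "noise_kernel t k",
      OF indep_samples[OF K(2)] noise_kernel_measurable[OF K(1)] mean C C_sq h_sq]
  show "integrable M (\<lambda>\<omega>. C (samples K \<omega>) \<bullet> noise t k \<omega>)"
    and "(\<integral>\<omega>. C (samples K \<omega>) \<bullet> noise t k \<omega> \<partial>M) = 0"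
    using zero_mean unfolding noise_eq_kernel[OF K(1)] by auto
qed

lemma finite_M: "finite_measure M"
  by (rule M.finite_measure_axioms)

lemma square_integrable_gf:
  assumes Y: "square_integrable M Y" and YD: "\<And>\<omega>. Y \<omega> \<in> edom r"
  shows "square_integrable M (\<lambda>\<omega>. gf i (Y \<omega>))"
proof (rule square_integrable_bound[OF finite_M Y])
  show "(\<lambda>\<omega>. gf i (Y \<omega>)) \<in> borel_measurable M"
    using Y YD unfolding square_integrable_def by (intro gf_measurable) auto
  show "norm (gf i (Y \<omega>)) \<le> (norm (gf i (x0 i)) + L * norm (x0 i)) + L * norm (Y \<omega>)" for \<omega>
  proof -
    have "norm (gf i (Y \<omega>)) \<le> norm (gf i (x0 i)) + norm (gf i (Y \<omega>) - gf i (x0 i))" by (rule norm_triangle_sub)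
    also have "norm (gf i (Y \<omega>) - gf i (x0 i)) \<le> L * norm (Y \<omega> - x0 i)" by (rule f_smooth[OF YD x0_dom])
    also have "norm (Y \<omega> - x0 i) \<le> norm (Y \<omega>) + norm (x0 i)" by (rule norm_triangle_ineq4)
    finally show ?thesis using L_pos by (simp add: algebra_simps mult_left_mono)
  qed
qed (use L_pos in auto)

lemma square_integrable_prox_r:
  assumes w: "square_integrable M w"
  shows "square_integrable M (\<lambda>\<omega>. prox_r (w \<omega>))"
proof (rule square_integrable_bound[OF finite_M w, where a = "norm (prox_r 0)" and b = 1])
  show "(\<lambda>\<omega>. prox_r (w \<omega>)) \<in> borel_measurable M"
    using w measurable_compose[OF _ borel_measurable_continuous_onI[OF prox_r_continuous]]
    unfolding square_integrable_def by auto
  show "norm (prox_r (w \<omega>)) \<le> norm (prox_r 0) + 1 * norm (w \<omega>)" for \<omega>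
    using norm_triangle_sub[of "prox_r (w \<omega>)" "prox_r 0"] prox_r_nonexpansive[of "w \<omega>" 0] by simp
qed auto

lemma square_integrable_prox_phi:
  assumes w: "square_integrable M w"
  shows "square_integrable M (\<lambda>\<omega>. prox_phi (w \<omega>))"
proof (rule square_integrable_bound[OF finite_M w, where a = "norm (prox_phi 0)" and b = "4/3"])
  show "(\<lambda>\<omega>. prox_phi (w \<omega>)) \<in> borel_measurable M"
    using w measurable_compose[OF _ borel_measurable_continuous_onI[OF prox_phi_continuous]]
    unfolding square_integrable_def by auto
  show "norm (prox_phi (w \<omega>)) \<le> norm (prox_phi 0) + 4/3 * norm (w \<omega>)" for \<omega>
    using norm_triangle_sub[of "prox_phi (w \<omega>)" "prox_phi 0"] prox_phi_lipschitz[of "w \<omega>" 0] by simp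
qed auto

lemma iter_square_integrable:
  "square_integrable M (\<lambda>\<omega>. iter_x xi t \<omega> i) \<and> square_integrable M (\<lambda>\<omega>. iter_y xi t \<omega> i)
     \<and> square_integrable M (\<lambda>\<omega>. iter_g xi t \<omega> i)"
proof (induction t arbitrary: i)
  case 0
  then show ?case by (simp add: iter_0 square_integrable_const[OF finite_M])
next
  case (Suc t)
  have IH: "square_integrable M (\<lambda>\<omega>. iter_x xi t \<omega> j)" "square_integrable M (\<lambda>\<omega>. iter_y xi t \<omega> j)"
    "square_integrable M (\<lambda>\<omega>. iter_g xi t \<omega> j)" for j
    using Suc by auto
  have "square_integrable M (\<lambda>\<omega>. noise t j \<omega> + gf j (iter_x xi t \<omega> j))" for j
    by (rule square_integrable_add[OF finite_M noise_square_integrable square_integrable_gf[OF IH(1) iter_x_in_edom]])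
  then have g: "square_integrable M (\<lambda>\<omega>. G j (iter_x xi t \<omega> j) (xi t j \<omega>))" for j
    unfolding noise_def by simp
  have y: "square_integrable M (\<lambda>\<omega>. iter_y xi (Suc t) \<omega> j)" for j
    unfolding iter_y_Suc
    by (intro square_integrable_sum[OF finite_M] square_integrable_scaleR[OF finite_M]
        square_integrable_diff[OF finite_M] square_integrable_add[OF finite_M] IH g)
  have "square_integrable M (\<lambda>\<omega>. iter_x xi (Suc t) \<omega> i)"
    unfolding iter_x_Suc
    by (intro square_integrable_sum[OF finite_M] square_integrable_scaleR[OF finite_M]
        square_integrable_prox_r square_integrable_diff[OF finite_M] IH y)
  then show ?case using y g by (simp add: iter_g_Suc)
qed

lemma noise_coeff_measurable:
  assumes Y: "\<And>j. (\<lambda>\<omega>. Y \<omega> j) \<in> borel_measurable N" and YD: "\<And>\<omega> j. Y \<omega> j \<in> edom r"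
  shows "(\<lambda>\<omega>. noise_coeff (Y \<omega>)) \<in> borel_measurable N"
proof -
  have P: "(\<lambda>\<omega>. prox_phi (Y \<omega> j)) \<in> borel_measurable N" for j
    using measurable_compose[OF Y borel_measurable_continuous_onI[OF prox_phi_continuous]] by simp
  have "(\<lambda>\<omega>. gf k (Y \<omega> j)) \<in> borel_measurable N" "(\<lambda>\<omega>. gf k (prox_phi (Y \<omega> j))) \<in> borel_measurable N" for k j
    by (intro gf_measurable Y YD P prox_phi_in_edom)+
  then show ?thesis unfolding noise_coeff_def grad_avg_def gmean_def using Y P by measurable
qed

lemma noise_coeff_square_integrable:
  assumes Y: "\<And>j. square_integrable M (\<lambda>\<omega>. Y \<omega> j)" and YD: "\<And>\<omega> j. Y \<omega> j \<in> edom r"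
  shows "square_integrable M (\<lambda>\<omega>. noise_coeff (Y \<omega>))"
  unfolding noise_coeff_def grad_avg_def gmean_def
  by (intro square_integrable_scaleR[OF finite_M] square_integrable_sum[OF finite_M]
      square_integrable_diff[OF finite_M] square_integrable_gf square_integrable_prox_phi Y YD prox_phi_in_edom)

lemma noise_coeff_noise_orthogonal:
  shows "integrable M (\<lambda>\<omega>. noise_coeff (iter_x xi t \<omega>) \<bullet> noise t k \<omega>)"
    and "(\<integral>\<omega>. noise_coeff (iter_x xi t \<omega>) \<bullet> noise t k \<omega> \<partial>M) = 0"
proof -
  have meas: "(\<lambda>u. noise_coeff (iter_x sample_coord t u)) \<in> borel_measurable (Samples (past t))"
    by (rule noise_coeff_measurable[OF iter_x_measurable_samples[OF order_refl] iter_x_in_edom])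
  have sq: "square_integrable M (\<lambda>\<omega>. noise_coeff (iter_x sample_coord t (samples (past t) \<omega>)))"
    unfolding iter_samples[OF order_refl]
    by (rule noise_coeff_square_integrable) (use iter_square_integrable iter_x_in_edom in auto)
  show "integrable M (\<lambda>\<omega>. noise_coeff (iter_x xi t \<omega>) \<bullet> noise t k \<omega>)"
    and "(\<integral>\<omega>. noise_coeff (iter_x xi t \<omega>) \<bullet> noise t k \<omega> \<partial>M) = 0"
    using noise_orthogonal[OF order_refl past_not_in meas sq] unfolding iter_samples[OF order_refl] by auto
qed

lemma noise_noise_orthogonal:
  assumes "j \<noteq> k"
  shows "(\<integral>\<omega>. noise t j \<omega> \<bullet> noise t k \<omega> \<partial>M) = 0"
proof -
  define K where "K = insert (t, j) (past t)"
  have K: "past t \<subseteq> K" "(t, k) \<notin> K" unfolding K_def past_def using assms by auto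
  have "(t, j) \<in> K" unfolding K_def by simp
  then have "noise t j = (\<lambda>\<omega>. noise_kernel t j (samples K \<omega>) (samples K \<omega>))"
    unfolding noise_def noise_kernel_def by (auto simp: iter_samples[OF K(1)] samples_apply)
  moreover have "(\<lambda>u. noise_kernel t j u u) \<in> borel_measurable (Samples K)"
  proof -
    have "(\<lambda>u. (u, restrict u {(t, j)})) \<in> Samples K \<rightarrow>\<^sub>M Samples K \<Otimes>\<^sub>M Samples {(t, j)}"
      unfolding K_def by measurable
    from measurable_compose[OF this noise_kernel_measurable[OF K(1)]]
    show ?thesis unfolding noise_kernel_def by simp
  qed
  ultimately show ?thesis
    using noise_orthogonal(2)[OF K] noise_square_integrable[of t j] by auto
qed

lemma env_integrable:
  assumes Y: "square_integrable M Y"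
  shows "integrable M (\<lambda>\<omega>. env (Y \<omega>))"
proof -
  obtain c where c: "\<And>x. x \<in> edom r \<Longrightarrow> c \<le> fmean x + rval x" using phi_lower_bound by blast
  obtain p where p: "p \<in> edom r" using closed_proper_convex_edom_nonempty[OF r_cvx] by blast
  define A where "A = \<bar>c\<bar> + \<bar>fmean p + rval p\<bar> + norm p ^ 2 / lam"
  have maj: "integrable M (\<lambda>\<omega>. A + (1 / lam) * norm (Y \<omega>)^2)"
    using Y unfolding square_integrable_def
    by (intro Bochner_Integration.integrable_add integrable_mult_right) (auto intro: finite_measure.integrable_const[OF finite_M])
  show ?thesis
  proof (rule Bochner_Integration.integrable_bound[OF maj])
    show "(\<lambda>\<omega>. env (Y \<omega>)) \<in> borel_measurable M"
      using Y measurable_compose[OF _ borel_measurable_continuous_onI[OF env_continuous]]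
      unfolding square_integrable_def by auto
    show "AE \<omega> in M. norm (env (Y \<omega>)) \<le> norm (A + (1 / lam) * norm (Y \<omega>)^2)"
    proof (rule AE_I2)
      fix \<omega>
      define y where "y = Y \<omega>"
      have "c \<le> env y" using env_eq[of y] c[OF prox_phi_in_edom[of y]] lam_pos by (simp add: add_increasing2)
      moreover have "env y \<le> fmean p + rval p + norm (p - y)^2 / (2 * lam)" by (rule env_le[OF p])
      moreover have "norm (p - y)^2 / (2 * lam) \<le> (2 * norm p ^ 2 + 2 * norm y ^ 2) / (2 * lam)"
        using norm_add_sq_le[of p "- y"] lam_pos by (intro divide_right_mono) auto
      moreover have "(2 * norm p ^ 2 + 2 * norm y ^ 2) / (2 * lam) = norm p ^ 2 / lam + (1 / lam) * norm y ^ 2"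
        using lam_pos by (simp add: field_simps)
      moreover have "0 \<le> norm p ^ 2 / lam" "0 \<le> (1 / lam) * norm y ^ 2" using lam_pos by simp_all
      ultimately have "\<bar>env y\<bar> \<le> A + (1 / lam) * norm y ^ 2" unfolding A_def by linarith
      then show "norm (env (Y \<omega>)) \<le> norm (A + (1 / lam) * norm (Y \<omega>)^2)" unfolding y_def by simp
    qed
  qed
qed

lemma perp_sq_integrable:
  fixes Y :: "'w \<Rightarrow> 'n \<Rightarrow> 'a"
  assumes "\<And>i. square_integrable M (\<lambda>\<omega>. Y \<omega> i)"
  shows "integrable M (\<lambda>\<omega>. perp_sq (Y \<omega>))"
  unfolding perp_sq_def
  by (intro Bochner_Integration.integrable_sum square_integrable_diff[OF finite_M]
      square_integrable_scaleR[OF finite_M] square_integrable_sum[OF finite_M] assms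
      conjunct2[OF iffD1[OF square_integrable_def]])

lemma prox_gap_integrable:
  fixes Y :: "'w \<Rightarrow> 'n \<Rightarrow> 'a"
  assumes "\<And>i. square_integrable M (\<lambda>\<omega>. Y \<omega> i)"
  shows "integrable M (\<lambda>\<omega>. \<Sum>i\<in>UNIV. norm (prox_phi (Y \<omega> i) - Y \<omega> i)^2)"
  by (intro Bochner_Integration.integrable_sum square_integrable_diff[OF finite_M] square_integrable_prox_phi
      assms conjunct2[OF iffD1[OF square_integrable_def]])

text \<open>Independence of the nodes' samples makes the noises of different nodes orthogonal,
  so averaging over the \<open>n\<close> nodes divides the variance by \<open>n\<close>.\<close>
lemma noise_mean_sq_le:
  "(\<integral>\<omega>. norm ((1 / real CARD('n)) *\<^sub>R (\<Sum>k\<in>UNIV. noise t k \<omega>))^2 \<partial>M) \<le> \<sigma>^2 / real CARD('n)"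
proof -
  define N where "N = real CARD('n)"
  have N0: "N > 0" unfolding N_def by simp
  have int: "integrable M (\<lambda>\<omega>. noise t j \<omega> \<bullet> noise t k \<omega>)" for j k
    by (rule square_integrable_inner[OF noise_square_integrable noise_square_integrable])
  have "norm ((1 / N) *\<^sub>R (\<Sum>k\<in>UNIV. noise t k \<omega>))^2
      = (1 / N)^2 * (\<Sum>j\<in>UNIV. \<Sum>k\<in>UNIV. noise t j \<omega> \<bullet> noise t k \<omega>)" for \<omega>
  proof -
    have "norm (\<Sum>k\<in>UNIV. noise t k \<omega>)^2 = (\<Sum>j\<in>UNIV. noise t j \<omega>) \<bullet> (\<Sum>k\<in>UNIV. noise t k \<omega>)"
      by (simp add: power2_norm_eq_inner)
    also have "\<dots> = (\<Sum>j\<in>UNIV. \<Sum>k\<in>UNIV. noise t j \<omega> \<bullet> noise t k \<omega>)"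
      by (simp add: inner_sum_left inner_sum_right, rule sum.swap)
    finally show ?thesis by (simp only: norm_scaleR power_mult_distrib power2_abs)
  qed
  then have "(\<integral>\<omega>. norm ((1 / N) *\<^sub>R (\<Sum>k\<in>UNIV. noise t k \<omega>))^2 \<partial>M)
      = (1 / N)^2 * (\<Sum>j\<in>UNIV. \<Sum>k\<in>UNIV. (\<integral>\<omega>. noise t j \<omega> \<bullet> noise t k \<omega> \<partial>M))"
    using int by (simp add: Bochner_Integration.integral_sum Bochner_Integration.integrable_sum)
  also have "(\<Sum>j\<in>UNIV. \<Sum>k\<in>UNIV. (\<integral>\<omega>. noise t j \<omega> \<bullet> noise t k \<omega> \<partial>M)) = (\<Sum>j\<in>UNIV. (\<integral>\<omega>. norm (noise t j \<omega>)^2 \<partial>M))"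
  proof (rule sum.cong[OF refl])
    fix j
    have "(\<Sum>k\<in>UNIV. (\<integral>\<omega>. noise t j \<omega> \<bullet> noise t k \<omega> \<partial>M))
        = (\<Sum>k\<in>UNIV. if k = j then (\<integral>\<omega>. norm (noise t j \<omega>)^2 \<partial>M) else 0)"
      by (rule sum.cong[OF refl]) (auto simp: noise_noise_orthogonal power2_norm_eq_inner)
    then show "(\<Sum>k\<in>UNIV. (\<integral>\<omega>. noise t j \<omega> \<bullet> noise t k \<omega> \<partial>M)) = (\<integral>\<omega>. norm (noise t j \<omega>)^2 \<partial>M)"
      by simp
  qed
  also have "(\<Sum>j\<in>UNIV. (\<integral>\<omega>. norm (noise t j \<omega>)^2 \<partial>M)) \<le> N * \<sigma>^2"
    using sum_mono[where K = UNIV, OF noise_integral_sq_le[of t]] unfolding N_def by simp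
  finally have "(\<integral>\<omega>. norm ((1 / N) *\<^sub>R (\<Sum>k\<in>UNIV. noise t k \<omega>))^2 \<partial>M) \<le> (1 / N)^2 * (N * \<sigma>^2)"
    by (simp add: mult_left_mono)
  also have "\<dots> = \<sigma>^2 / N" using N0 by (simp add: power2_eq_square field_simps)
  finally show ?thesis unfolding N_def .
qed

lemma noise_terms_expectation_le:
  fixes t :: nat
  defines "e \<equiv> \<lambda>\<omega>. (1 / real CARD('n)) *\<^sub>R (\<Sum>k\<in>UNIV. noise t k \<omega>)"
  shows "integrable M (\<lambda>\<omega>. noise_coeff (iter_x xi t \<omega>) \<bullet> e \<omega> + (real CARD('n) * \<eta>^2 / lam) * norm (e \<omega>)^2)"
    and "(\<integral>\<omega>. noise_coeff (iter_x xi t \<omega>) \<bullet> e \<omega> + (real CARD('n) * \<eta>^2 / lam) * norm (e \<omega>)^2 \<partial>M)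
           \<le> \<eta>^2 * \<sigma>^2 / lam"
proof -
  define N where "N = real CARD('n)"
  have N0: "N > 0" unfolding N_def by simp
  have cross_eq: "noise_coeff (iter_x xi t \<omega>) \<bullet> e \<omega> = (1 / N) * (\<Sum>k\<in>UNIV. noise_coeff (iter_x xi t \<omega>) \<bullet> noise t k \<omega>)"
    for \<omega> unfolding e_def N_def by (simp add: inner_sum_right)
  have cross: "integrable M (\<lambda>\<omega>. noise_coeff (iter_x xi t \<omega>) \<bullet> e \<omega>)"
    "(\<integral>\<omega>. noise_coeff (iter_x xi t \<omega>) \<bullet> e \<omega> \<partial>M) = 0"
    unfolding cross_eq
    by (simp_all add: Bochner_Integration.integral_sum noise_coeff_noise_orthogonal)
  have "square_integrable M e"
    unfolding e_def by (intro square_integrable_scaleR[OF finite_M] square_integrable_sum[OF finite_M] noise_square_integrable)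
  then have sq: "integrable M (\<lambda>\<omega>. norm (e \<omega>)^2)" unfolding square_integrable_def by simp
  show "integrable M (\<lambda>\<omega>. noise_coeff (iter_x xi t \<omega>) \<bullet> e \<omega> + (real CARD('n) * \<eta>^2 / lam) * norm (e \<omega>)^2)"
    using cross(1) sq by simp
  have "(\<integral>\<omega>. noise_coeff (iter_x xi t \<omega>) \<bullet> e \<omega> + (N * \<eta>^2 / lam) * norm (e \<omega>)^2 \<partial>M)
      = (N * \<eta>^2 / lam) * (\<integral>\<omega>. norm (e \<omega>)^2 \<partial>M)"
    using cross sq by simp
  also have "\<dots> \<le> (N * \<eta>^2 / lam) * (\<sigma>^2 / N)"
    using noise_mean_sq_le[of t] N0 lam_pos unfolding e_def N_def by (intro mult_left_mono) auto
  also have "\<dots> = \<eta>^2 * \<sigma>^2 / lam" using N0 by (simp add: field_simps)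
  finally show "(\<integral>\<omega>. noise_coeff (iter_x xi t \<omega>) \<bullet> e \<omega> + (real CARD('n) * \<eta>^2 / lam) * norm (e \<omega>)^2 \<partial>M)
      \<le> \<eta>^2 * \<sigma>^2 / lam" unfolding N_def .
qed

lemma expected_env_step_le:
  "(\<Sum>i\<in>UNIV. \<integral>\<omega>. env (iter_x xi (Suc t) \<omega> i) \<partial>M)
   \<le> (\<Sum>i\<in>UNIV. \<integral>\<omega>. env (iter_x xi t \<omega> i) \<partial>M) + (4 / lam) * (\<integral>\<omega>. perp_sq (iter_x xi t \<omega>) \<partial>M)
     + (4 * \<eta>^2 / lam) * (\<integral>\<omega>. perp_sq (iter_y xi (Suc t) \<omega>) \<partial>M)
     - (\<eta> / (4 * lam^2)) * (\<integral>\<omega>. (\<Sum>i\<in>UNIV. norm (prox_phi (iter_x xi t \<omega> i) - iter_x xi t \<omega> i)^2) \<partial>M)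
     + \<eta>^2 * \<sigma>^2 / lam"
proof -
  define e where "e \<omega> = (1 / real CARD('n)) *\<^sub>R (\<Sum>k\<in>UNIV. noise t k \<omega>)" for \<omega>
  define env_next where "env_next \<omega> = (\<Sum>i\<in>UNIV. env (iter_x xi (Suc t) \<omega> i))" for \<omega>
  define env_now where "env_now \<omega> = (\<Sum>i\<in>UNIV. env (iter_x xi t \<omega> i))" for \<omega>
  define cons_x where "cons_x \<omega> = perp_sq (iter_x xi t \<omega>)" for \<omega>
  define cons_y where "cons_y \<omega> = perp_sq (iter_y xi (Suc t) \<omega>)" for \<omega>
  define gap where "gap \<omega> = (\<Sum>i\<in>UNIV. norm (prox_phi (iter_x xi t \<omega> i) - iter_x xi t \<omega> i)^2)" for \<omega>
  define noise_terms where
    "noise_terms \<omega> = noise_coeff (iter_x xi t \<omega>) \<bullet> e \<omega> + (real CARD('n) * \<eta>^2 / lam) * norm (e \<omega>)^2" for \<omega>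
  have x_sq: "square_integrable M (\<lambda>\<omega>. iter_x xi s \<omega> i)" and y_sq: "square_integrable M (\<lambda>\<omega>. iter_y xi s \<omega> i)"
    for s i using iter_square_integrable by blast+
  have int: "integrable M env_next" "integrable M env_now" "integrable M cons_x" "integrable M cons_y"
    "integrable M gap" "integrable M noise_terms"
    unfolding env_next_def env_now_def cons_x_def cons_y_def gap_def noise_terms_def e_def
    by (intro Bochner_Integration.integrable_sum env_integrable perp_sq_integrable prox_gap_integrable
        noise_terms_expectation_le(1) x_sq y_sq)+
  have "(\<integral>\<omega>. env_next \<omega> \<partial>M) \<le> (\<integral>\<omega>. env_now \<omega> + (4 / lam) * cons_x \<omega> + (4 * \<eta>^2 / lam) * cons_y \<omega>
      - (\<eta> / (4 * lam^2)) * gap \<omega> + noise_terms \<omega> \<partial>M)"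
  proof (rule integral_mono)
    show "env_next \<omega> \<le> env_now \<omega> + (4 / lam) * cons_x \<omega> + (4 * \<eta>^2 / lam) * cons_y \<omega>
      - (\<eta> / (4 * lam^2)) * gap \<omega> + noise_terms \<omega>" for \<omega>
      using iter_env_step_le[of xi t \<omega>] unfolding noise_def[symmetric]
      unfolding env_next_def env_now_def cons_x_def cons_y_def gap_def noise_terms_def e_def by linarith
  qed (use int in auto)
  also have "\<dots> = (\<integral>\<omega>. env_now \<omega> \<partial>M) + (4 / lam) * (\<integral>\<omega>. cons_x \<omega> \<partial>M)
      + (4 * \<eta>^2 / lam) * (\<integral>\<omega>. cons_y \<omega> \<partial>M) - (\<eta> / (4 * lam^2)) * (\<integral>\<omega>. gap \<omega> \<partial>M) + (\<integral>\<omega>. noise_terms \<omega> \<partial>M)"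
    using int by simp
  also have "(\<integral>\<omega>. noise_terms \<omega> \<partial>M) \<le> \<eta>^2 * \<sigma>^2 / lam"
    unfolding noise_terms_def e_def by (rule noise_terms_expectation_le(2))
  finally show ?thesis
    unfolding env_next_def env_now_def cons_x_def cons_y_def gap_def
    by (simp add: Bochner_Integration.integral_sum env_integrable x_sq)
qed

end

theorem lemmaB4:
  fixes M :: "'w measure" and S :: "'b measure" and D :: "'n::finite \<Rightarrow> 'b measure"
    and F :: "'n \<Rightarrow> 'a::euclidean_space \<Rightarrow> 'b \<Rightarrow> real"
    and G :: "'n \<Rightarrow> 'a \<Rightarrow> 'b \<Rightarrow> 'a"
    and f :: "'n \<Rightarrow> 'a \<Rightarrow> real" and gf :: "'n \<Rightarrow> 'a \<Rightarrow> 'a"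
    and r :: "'a \<Rightarrow> ereal" and \<phi> :: "'a \<Rightarrow> ereal"
    and W :: "real^'n^'n" and E :: "'n \<Rightarrow> 'n \<Rightarrow> bool"
    and xi :: "nat \<Rightarrow> 'n \<Rightarrow> 'w \<Rightarrow> 'b" and x0 :: "'n \<Rightarrow> 'a"
    and L \<sigma> \<eta> lam :: real and t :: nat
  assumes
    \<comment> \<open>regularizer: closed (proper) convex\<close>
    r_cvx: "closed_proper_convex r"
    \<comment> \<open>stochastic model: f_i(x) = E[F_i(x,xi_i)], F_i(.,xi) has gradient G_i(.,xi) on dom r\<close>
  and D_prob: "\<And>i. prob_space (D i)"
  and f_def: "\<And>i x. x \<in> edom r \<Longrightarrow> has_bochner_integral (D i) (F i x) (f i x)"
  and F_grad: "\<And>i x s. x \<in> edom r \<Longrightarrow>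
                  ((\<lambda>z. F i z s) has_derivative (\<lambda>h. G i x s \<bullet> h)) (at x within edom r)"
    \<comment> \<open>each f_i is L-smooth on dom r with gradient gf i\<close>
  and L_pos: "L > 0"
  and f_grad: "\<And>i x. x \<in> edom r \<Longrightarrow> (f i has_derivative (\<lambda>h. gf i x \<bullet> h)) (at x within edom r)"
  and f_smooth: "\<And>i x y. x \<in> edom r \<Longrightarrow> y \<in> edom r \<Longrightarrow> norm (gf i x - gf i y) \<le> L * norm (x - y)"
    \<comment> \<open>phi = f + r bounded below\<close>
  and phi_def: "\<And>x. \<phi> x = ereal ((1 / real CARD('n)) * (\<Sum>i\<in>UNIV. f i x)) + r x"
  and phi_lb: "\<exists>c. \<forall>x. ereal c \<le> \<phi> x"
    \<comment> \<open>mixing matrix on a connected graph\<close>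
  and E_sym: "\<And>i j. E i j \<Longrightarrow> E j i"
  and E_conn: "\<And>i j. (i, j) \<in> {(a, b). E a b}\<^sup>*"
  and W_nonneg: "\<And>i j. W $ i $ j \<ge> 0"
  and W_rows: "\<And>i. (\<Sum>j\<in>UNIV. W $ i $ j) = 1"
  and W_cols: "\<And>j. (\<Sum>i\<in>UNIV. W $ i $ j) = 1"
  and W_graph: "\<And>i j. i \<noteq> j \<Longrightarrow> \<not> E i j \<Longrightarrow> W $ i $ j = 0"
  and W_null: "{v. (W - mat 1) *v v = 0} = span {vec 1 :: real^'n}"
  and W_gap: "onorm (\<lambda>v. (W - (\<chi> i j. 1 / real CARD('n))) *v v) < 1"
    \<comment> \<open>independent samples xi_i^t ~ D_i, unbiased stochastic gradients with bounded variance\<close>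
  and M_prob: "prob_space M"
  and xi_distr: "\<And>t i. distr M S (xi t i) = D i"
  and xi_indep: "prob_space.indep_vars M (\<lambda>_. S) (\<lambda>(t, i). xi t i) UNIV"
  and G_meas: "\<And>i. (\<lambda>(x, s). G i x s) \<in> borel_measurable (borel \<Otimes>\<^sub>M S)"
  and G_unbiased: "\<And>i x. x \<in> edom r \<Longrightarrow> has_bochner_integral (D i) (G i x) (gf i x)"
  and G_var: "\<And>i x. x \<in> edom r \<Longrightarrow>
                (\<integral>\<^sup>+ s. ennreal (norm (G i x s - gf i x)^2) \<partial>(D i)) \<le> ennreal (\<sigma>^2)"
    \<comment> \<open>initialization and step sizes\<close>
  and x0_dom: "\<And>i. x0 i \<in> edom r"
  and eta_pos: "\<eta> > 0"
  and lam_pos: "lam > 0"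
  and eta_le: "\<eta> \<le> lam"
  and lam_le: "lam \<le> 1 / (4 * L)"
  shows
    "(\<Sum>i\<in>UNIV. \<integral>\<omega>. real_of_ereal (moreau \<phi> lam (dX W G r \<eta> x0 xi (Suc t) \<omega> i)) \<partial>M)
     \<le> (\<Sum>i\<in>UNIV. \<integral>\<omega>. real_of_ereal (moreau \<phi> lam (dX W G r \<eta> x0 xi t \<omega> i)) \<partial>M)
       + (4 / lam) * (\<integral>\<omega>. perp_sq (dX W G r \<eta> x0 xi t \<omega>) \<partial>M)
       + (4 * \<eta>^2 / lam) * (\<integral>\<omega>. perp_sq (dY W G r \<eta> x0 xi t \<omega>) \<partial>M)
       - (\<eta> / (4 * lam^2)) *
           (\<integral>\<omega>. (\<Sum>i\<in>UNIV. norm (prox_of \<phi> lam (dX W G r \<eta> x0 xi t \<omega> i) - dX W G r \<eta> x0 xi t \<omega> i)^2) \<partial>M)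
       + \<eta>^2 * \<sigma>^2 / lam"
proof -
  interpret dprox_stochastic r f gf \<phi> L \<eta> lam W G x0 M S D xi \<sigma>
    by (intro dprox_stochastic.intro dprox_algorithm.intro prox_setting.intro
        dprox_algorithm_axioms.intro dprox_stochastic_axioms.intro) (fact assms)+
  show ?thesis
    using expected_env_step_le[of t] unfolding env_def prox_phi_def dX_def dY_def iter_x_def iter_y_def .
qed

end
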